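(* For any solution of mean curvature flow with perpendicular Neumann boundary condition on $\Sigma$ (as in the Setup), at every point of $\partial M\times[0,T)$, \[\Big\langle\nabla\frac{H}{S},\mu\Big\rangle=0.\]
   Context: Setup. Let $n\ge 2$ and let $\mathbb R^{n+1}_1$ denote $\mathbb R^{n+1}$ with the Minkowski metric $\langle x,y\rangle=x_1y_1+\dots+x_ny_n-x_{n+1}y_{n+1}$ and Levi-Civita connection $\overline\nabla$. Let $\widetilde S\subset\mathbb R^n$ be a smooth closed embedded hypersurface contained in the open unit ball $B_1(0)\subset\mathbb R^n$ and bounding a domain $D$. The boundary cone is $\Sigma=\{l(x,1): l>0,\ x\in\widetilde S\}$ and the solid cone is $\mathcal C=\{l(x,1): l>0,\ x\in\overline D\}$. Let $\mu$ be the (spacelike) unit normal of $\Sigma$ pointing out of $\mathcal C$, and $A^\Sigma(X,Y)=\langle\overline\nabla_X\mu,Y\rangle$ the second fundamental form of $\Sigma$. A solution of mean curvature flow with perpendicular Neumann boundary condition on $\Sigma$ is a smooth map $\mathbf F:M^n\times[0,T)\to\mathbb R^{n+1}_1$, $M^n$ a compact smooth $n$-manifold with boundary, such that each $\mathbf F(\cdot,t)$ is a spacelike embedding (induced metric $g$ Riemannian) with image $M_t\subset\mathcal C$, and $\partial_t\mathbf F=H\nu$ on $M\times[0,T)$, $\mathbf F(\partial M,t)\subset\Sigma$ and $\langle\nu,\mu\rangle=0$ on $\partial M\times[0,T)$. Here $\nu$ is the future-directed timelike unit normal of $M_t$ ($\langle\nu,\nu\rangle=-1$, $\nu_{n+1}>0$),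 $A(X,Y)=\langle\overline\nabla_X\nu,Y\rangle$ is the second fundamental form of $M_t$, $H=\mathrm{tr}_gA$ is the mean curvature (so $\Delta_{M_t}\mathbf F=H\nu$), and $\nabla,\Delta,|\cdot|$ are taken with respect to $g$. Along $\partial M$ the vector $\mu$ is tangent to $M_t$. Set $F^2=-\langle\mathbf F,\mathbf F\rangle>0$, $F=\sqrt{F^2}$, and $S=-\langle\mathbf F,\nu\rangle$ (so $S\ge F>0$). *)

theory Defs
  imports "HOL-Analysis.Analysis"
begin

text \<open>Minkowski space R^{n+1}_1 is modelled as (real^'n) \<times> real; the last
  (time) coordinate is the second component.\<close>

type_synonym 'n pt = "(real^'n) \<times> real"

definition mink :: "'n::finite pt \<Rightarrow> 'n pt \<Rightarrow> real" where
  "mink p q = fst p \<bullet> fst q - snd p * snd q"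

fun Ck_on :: "nat \<Rightarrow> 'a::real_normed_vector set \<Rightarrow> ('a \<Rightarrow> 'b::real_normed_vector) \<Rightarrow> bool" where
  "Ck_on 0 W f = continuous_on W f"
| "Ck_on (Suc k) W f =
     (\<exists>f'. (\<forall>x\<in>W. (f has_derivative f' x) (at x)) \<and> (\<forall>v. Ck_on k W (\<lambda>x. f' x v)))"

definition smooth_on :: "'a::real_normed_vector set \<Rightarrow> ('a \<Rightarrow> 'b::real_normed_vector) \<Rightarrow> bool" where
  "smooth_on W f \<longleftrightarrow> (\<forall>k. Ck_on k W f)"

definition egrad :: "(real^'n::finite \<Rightarrow> real) \<Rightarrow> real^'n \<Rightarrow> real^'n" where
  "egrad \<phi> x = (\<chi> i. frechet_derivative \<phi> (at x) (axis i 1))"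

definition bcone :: "(real^'n::finite \<Rightarrow> real) \<Rightarrow> 'n pt set" where
  "bcone \<phi> = {(l *\<^sub>R x, l) | l x. l > 0 \<and> \<phi> x = 0}"

definition scone :: "(real^'n::finite \<Rightarrow> real) \<Rightarrow> 'n pt set" where
  "scone \<phi> = {(l *\<^sub>R x, l) | l x. l > 0 \<and> x \<in> closure {y. \<phi> y < 0}}"

text \<open>Outward (out of the solid cone) spacelike unit normal of the boundary cone
  at p = l(x,1): the normalised Minkowski gradient of (y,s) \<mapsto> phi(y/s).\<close>

definition cone_normal :: "(real^'n::finite \<Rightarrow> real) \<Rightarrow> 'n pt \<Rightarrow> 'n pt" where
  "cone_normal \<phi> p =
     (let x = fst p /\<^sub>R snd p;
          N = (egrad \<phi> x, egrad \<phi> x \<bullet> x)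
      in N /\<^sub>R sqrt (mink N N))"

text \<open>Quantities of the evolving hypersurface, in a local parametrisation
  F (u,t), u \<in> R^n (parameter), t time.\<close>

definition dX :: "('n::finite pt \<Rightarrow> 'n pt) \<Rightarrow> real^'n \<Rightarrow> real \<Rightarrow> 'n \<Rightarrow> 'n pt" where
  "dX F u t i = frechet_derivative (\<lambda>v. F (v, t)) (at u) (axis i 1)"

definition gmat :: "('n::finite pt \<Rightarrow> 'n pt) \<Rightarrow> real^'n \<Rightarrow> real \<Rightarrow> real^'n^'n" where
  "gmat F u t = (\<chi> i j. mink (dX F u t i) (dX F u t j))"

definition ginv :: "('n::finite pt \<Rightarrow> 'n pt) \<Rightarrow> real^'n \<Rightarrow> real \<Rightarrow> real^'n^'n" where
  "ginv F u t = matrix_inv (gmat F u t)"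

definition nu :: "('n::finite pt \<Rightarrow> 'n pt) \<Rightarrow> real^'n \<Rightarrow> real \<Rightarrow> 'n pt" where
  "nu F u t = (THE n. (\<forall>i. mink n (dX F u t i) = 0) \<and> mink n n = -1 \<and> snd n > 0)"

definition sff :: "('n::finite pt \<Rightarrow> 'n pt) \<Rightarrow> real^'n \<Rightarrow> real \<Rightarrow> 'n \<Rightarrow> 'n \<Rightarrow> real" where
  "sff F u t i j = mink (frechet_derivative (\<lambda>v. nu F v t) (at u) (axis i 1)) (dX F u t j)"

definition mcurv :: "('n::finite pt \<Rightarrow> 'n pt) \<Rightarrow> real^'n \<Rightarrow> real \<Rightarrow> real" where
  "mcurv F u t = (\<Sum>i\<in>UNIV. \<Sum>j\<in>UNIV. ginv F u t $ i $ j * sff F u t i j)"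

definition Sfun :: "('n::finite pt \<Rightarrow> 'n pt) \<Rightarrow> real^'n \<Rightarrow> real \<Rightarrow> real" where
  "Sfun F u t = - mink (F (u, t)) (nu F u t)"

definition mgrad :: "('n::finite pt \<Rightarrow> 'n pt) \<Rightarrow> real \<Rightarrow> (real^'n \<Rightarrow> real) \<Rightarrow> real^'n \<Rightarrow> 'n pt" where
  "mgrad F t f u = (\<Sum>i\<in>UNIV. \<Sum>j\<in>UNIV.
      (ginv F u t $ i $ j * frechet_derivative f (at u) (axis j 1)) *\<^sub>R dX F u t i)"

end

theory Submission
  imports Defs
begin

text \<open>
  Since \<open>\<nabla>(H/S) = (S \<nabla>H - H \<nabla>S)/S\<^sup>2\<close>, it suffices to show that the
  derivatives of \<open>H\<close> and \<open>S\<close> along \<open>\<mu>\<close> are \<open>-H c\<close> and \<open>-S c\<close> for the same number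
  \<open>c = \<langle>\<nu>, D\<mu>(\<nu>)\<rangle>\<close>. For \<open>H\<close> this follows by differentiating the Neumann
  condition \<open>\<langle>\<nu>, \<mu>\<circ>F\<rangle> = 0\<close> in time and using the flow equation \<open>\<partial>_t F = H\<nu>\<close>;
  for \<open>S = -\<langle>F, \<nu>\<rangle>\<close> it follows by differentiating the Neumann condition along the
  boundary, using that \<open>\<mu>\<close> is homogeneous of degree zero (so \<open>D\<mu>(F) = 0\<close>), that the
  boundary lies on the cone (so \<open>\<mu>\<close> is orthogonal to the boundary-tangential frame
  vectors) and the symmetry of the second fundamental form.
\<close>

lemma CkI: "(\<forall>x\<in>S. (f has_derivative f' x) (at x)) \<Longrightarrow> (\<forall>v. Ck_on k S (\<lambda>x. f' x v)) \<Longrightarrow> Ck_on (Suc k) S f"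
  by (simp only: Ck_on.simps(2)) (rule exI[of _ f'], blast)

lemma Ck_subset: "Ck_on k S f \<Longrightarrow> T \<subseteq> S \<Longrightarrow> Ck_on k T f"
proof (induction k arbitrary: f)
  case 0 then show ?case by (auto intro: continuous_on_subset)
next
  case (Suc k)
  then obtain f' where d: "\<forall>x\<in>S. (f has_derivative f' x) (at x)" "\<forall>v. Ck_on k S (\<lambda>x. f' x v)"
    by auto
  then have "\<forall>x\<in>T. (f has_derivative f' x) (at x)" "\<forall>v. Ck_on k T (\<lambda>x. f' x v)"
    using Suc by auto
  then show ?case by (rule CkI)
qed

lemma Ck_Suc_imp: "Ck_on (Suc k) S f \<Longrightarrow> Ck_on k S f"
proof (induction k arbitrary: f)
  case 0
  then obtain f' where "\<forall>x\<in>S. (f has_derivative f' x) (at x)" by auto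
  then show ?case
    by (auto intro!: continuous_at_imp_continuous_on has_derivative_continuous)
next
  case (Suc k)
  then obtain f' where d: "\<forall>x\<in>S. (f has_derivative f' x) (at x)" "\<forall>v. Ck_on (Suc k) S (\<lambda>x. f' x v)"
    by (metis Ck_on.simps(2))
  then have "\<forall>v. Ck_on k S (\<lambda>x. f' x v)" using Suc.IH by blast
  with d(1) show ?case by (rule CkI)
qed

lemma Ck_cong: "open S \<Longrightarrow> (\<And>x. x \<in> S \<Longrightarrow> f x = g x) \<Longrightarrow> Ck_on k S f \<Longrightarrow> Ck_on k S g"
proof (cases k)
  case 0
  assume "(\<And>x. x \<in> S \<Longrightarrow> f x = g x)" "Ck_on k S f"
  then show ?thesis using 0 continuous_on_cong[of S S f g] by simp
next
  case (Suc m)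
  assume o: "open S" and e: "(\<And>x. x \<in> S \<Longrightarrow> f x = g x)" and c: "Ck_on k S f"
  then obtain f' where d: "\<forall>x\<in>S. (f has_derivative f' x) (at x)" "\<forall>v. Ck_on m S (\<lambda>x. f' x v)"
    using Suc by auto
  have "\<forall>x\<in>S. (g has_derivative f' x) (at x)"
    using d(1) o e has_derivative_transform_within_open[of f _ x UNIV S g for x] by blast
  then show ?thesis using d(2) unfolding Suc by (rule CkI)
qed

lemma Ck_const: "Ck_on k S (\<lambda>x. c)"
proof (induction k arbitrary: c)
  case 0 then show ?case by simp
next
  case (Suc k)
  have d: "\<forall>x\<in>S. ((\<lambda>x. c) has_derivative (\<lambda>v. 0)) (at x)" by simp
  show ?case by (rule CkI[OF d]) (simp add: Suc.IH)
qed

lemma Ck_linear: "bounded_linear L \<Longrightarrow> Ck_on k S f \<Longrightarrow> Ck_on k S (\<lambda>x. L (f x))"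
proof (induction k arbitrary: f)
  case 0 then show ?case by (auto intro: bounded_linear.continuous_on)
next
  case (Suc k)
  then obtain f' where d: "\<forall>x\<in>S. (f has_derivative f' x) (at x)" "\<forall>v. Ck_on k S (\<lambda>x. f' x v)"
    by auto
  have "\<forall>x\<in>S. ((\<lambda>x. L (f x)) has_derivative (\<lambda>v. L (f' x v))) (at x)"
    using d(1) Suc.prems(1) bounded_linear.has_derivative by blast
  moreover have "\<forall>v. Ck_on k S (\<lambda>x. L (f' x v))" using d(2) Suc by blast
  ultimately show ?case by (rule CkI)
qed

lemma Ck_add: "Ck_on k S f \<Longrightarrow> Ck_on k S g \<Longrightarrow> Ck_on k S (\<lambda>x. f x + g x)"
proof (induction k arbitrary: f g)
  case 0 then show ?case by (auto intro: continuous_on_add)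
next
  case (Suc k)
  then obtain f' g' where d: "\<forall>x\<in>S. (f has_derivative f' x) (at x)" "\<forall>v. Ck_on k S (\<lambda>x. f' x v)"
    "\<forall>x\<in>S. (g has_derivative g' x) (at x)" "\<forall>v. Ck_on k S (\<lambda>x. g' x v)"
    by auto
  have "\<forall>x\<in>S. ((\<lambda>x. f x + g x) has_derivative (\<lambda>v. f' x v + g' x v)) (at x)"
    using d by (auto intro: has_derivative_add)
  moreover have "\<forall>v. Ck_on k S (\<lambda>x. f' x v + g' x v)" using d Suc by blast
  ultimately show ?case by (rule CkI)
qed

lemma Ck_bilinear: "bounded_bilinear b \<Longrightarrow> Ck_on k S f \<Longrightarrow> Ck_on k S g \<Longrightarrow> Ck_on k S (\<lambda>x. b (f x) (g x))"
proof (induction k arbitrary: f g)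
  case 0 then show ?case by (auto intro: bounded_bilinear.continuous_on)
next
  case (Suc k)
  then obtain f' g' where d: "\<forall>x\<in>S. (f has_derivative f' x) (at x)" "\<forall>v. Ck_on k S (\<lambda>x. f' x v)"
    "\<forall>x\<in>S. (g has_derivative g' x) (at x)" "\<forall>v. Ck_on k S (\<lambda>x. g' x v)"
    by auto
  have "\<forall>x\<in>S. ((\<lambda>x. b (f x) (g x)) has_derivative (\<lambda>v. b (f x) (g' x v) + b (f' x v) (g x))) (at x)"
    using d Suc.prems(1) by (auto intro: bounded_bilinear.FDERIV)
  moreover have "\<forall>v. Ck_on k S (\<lambda>x. b (f x) (g' x v) + b (f' x v) (g x))"
  proof
    fix v
    have "Ck_on k S f" "Ck_on k S g" using Suc.prems Ck_Suc_imp by blast+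
    then show "Ck_on k S (\<lambda>x. b (f x) (g' x v) + b (f' x v) (g x))"
      using d Suc.IH Suc.prems(1) by (intro Ck_add) auto
  qed
  ultimately show ?case by (rule CkI)
qed

lemma Ck_sum: "finite I \<Longrightarrow> (\<And>i. i \<in> I \<Longrightarrow> Ck_on k S (f i)) \<Longrightarrow> Ck_on k S (\<lambda>x. \<Sum>i\<in>I. f i x)"
proof (induction I rule: finite_induct)
  case empty then show ?case by (simp add: Ck_const)
next
  case (insert a I)
  have "Ck_on k S (\<lambda>x. f a x + (\<Sum>i\<in>I. f i x))"
    using insert by (intro Ck_add) auto
  then show ?case using insert(1,2) by simp
qed

lemma Ck_prod: "finite I \<Longrightarrow> (\<And>i. i \<in> I \<Longrightarrow> Ck_on k S (f i)) \<Longrightarrow> Ck_on k S (\<lambda>x. \<Prod>i\<in>I. (f i x::real))"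
proof (induction I rule: finite_induct)
  case empty then show ?case by (simp add: Ck_const)
next
  case (insert a I)
  have "Ck_on k S (\<lambda>x. f a x * (\<Prod>i\<in>I. f i x))"
    using insert by (intro Ck_bilinear[OF bounded_bilinear_mult]) auto
  then show ?case using insert(1,2) by simp
qed

text \<open>Expansion of a bounded linear map on a basis; used to write \<open>g'(f x)(f' x v)\<close> as a
  smooth expression in the chain rule for \<open>C^k\<close> maps.\<close>

lemma bounded_linear_basis_expansion:
  fixes L :: "'b::euclidean_space \<Rightarrow> 'c::real_normed_vector"
  assumes "bounded_linear L"
  shows "L w = (\<Sum>b\<in>Basis. (w \<bullet> b) *\<^sub>R L b)"
proof -
  have "(\<Sum>b\<in>Basis. (w \<bullet> b) *\<^sub>R L b) = L (\<Sum>b\<in>Basis. (w \<bullet> b) *\<^sub>R b)"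
    by (simp add: linear_sum bounded_linear.linear assms linear_simps)
  then show ?thesis by (simp add: euclidean_representation)
qed

lemma Ck_compose:
  fixes g :: "'b::euclidean_space \<Rightarrow> 'c::real_normed_vector" and f :: "'a::real_normed_vector \<Rightarrow> 'b"
  assumes "open S" "open T"
  shows "Ck_on k T g \<Longrightarrow> Ck_on k S f \<Longrightarrow> f ` S \<subseteq> T \<Longrightarrow> Ck_on k S (\<lambda>x. g (f x))"
proof (induction k arbitrary: g f)
  case 0 then show ?case by (auto intro: continuous_on_compose2)
next
  case (Suc k)
  from Suc.prems(1) obtain g' where g: "\<forall>y\<in>T. (g has_derivative g' y) (at y)" "\<forall>v. Ck_on k T (\<lambda>y. g' y v)"
    by auto
  from Suc.prems(2) obtain f' where f: "\<forall>x\<in>S. (f has_derivative f' x) (at x)" "\<forall>v. Ck_on k S (\<lambda>x. f' x v)"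
    by auto
  have d: "\<forall>x\<in>S. ((\<lambda>x. g (f x)) has_derivative (\<lambda>v. g' (f x) (f' x v))) (at x)"
  proof
    fix x assume x: "x \<in> S"
    have "((g \<circ> f) has_derivative (g' (f x) \<circ> f' x)) (at x)"
      using x f(1) g(1) Suc.prems(3) by (intro diff_chain_at) auto
    then show "((\<lambda>x. g (f x)) has_derivative (\<lambda>v. g' (f x) (f' x v))) (at x)"
      by (simp add: o_def)
  qed
  have "Ck_on k S (\<lambda>x. g' (f x) (f' x v))" for v
  proof -
    have fk: "Ck_on k S f" using Suc.prems(2) Ck_Suc_imp by blast
    have "Ck_on k S (\<lambda>x. \<Sum>b\<in>Basis. (f' x v \<bullet> b) *\<^sub>R g' (f x) b)"
    proof (rule Ck_sum)
      fix b :: 'b assume "b \<in> Basis"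
      have a: "Ck_on k S (\<lambda>x. f' x v \<bullet> b)"
        using f(2) by (intro Ck_linear[OF bounded_linear_inner_left]) auto
      have c: "Ck_on k S (\<lambda>x. g' (f x) b)"
        using Suc.IH[of "\<lambda>y. g' y b" f] g(2) fk Suc.prems(3) by blast
      show "Ck_on k S (\<lambda>x. (f' x v \<bullet> b) *\<^sub>R g' (f x) b)"
        using Ck_bilinear[OF bounded_bilinear_scaleR a c] .
    qed simp
    then show ?thesis
    proof (rule Ck_cong[OF assms(1), rotated])
      fix x assume x: "x \<in> S"
      then have "bounded_linear (g' (f x))" using g(1) Suc.prems(3)
        by (meson has_derivative_bounded_linear image_subset_iff)
      then show "(\<Sum>b\<in>Basis. (f' x v \<bullet> b) *\<^sub>R g' (f x) b) = g' (f x) (f' x v)"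
        using bounded_linear_basis_expansion by metis
    qed
  qed
  then show ?case using d by (intro CkI) auto
qed

lemma Ck_inverse: "Ck_on k {x::real. x \<noteq> 0} inverse"
proof (induction k)
  case 0 then show ?case by (auto intro!: continuous_on_inverse continuous_on_id)
next
  case (Suc k)
  have d: "\<forall>x\<in>{x::real. x \<noteq> 0}. (inverse has_derivative (\<lambda>v. - (inverse x * v * inverse x))) (at x)"
    by (auto intro: has_derivative_inverse')
  have "Ck_on k {x::real. x \<noteq> 0} (\<lambda>x. - (inverse x * v * inverse x))" for v
  proof -
    have "Ck_on k {x::real. x \<noteq> 0} (\<lambda>x. (-v) * (inverse x * inverse x))"
      by (intro Ck_bilinear[OF bounded_bilinear_mult] Ck_const Suc)
    then show ?thesis by (rule Ck_cong[rotated 2]) (auto simp: open_Collect_neq)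
  qed
  then show ?case using d by (intro CkI) auto
qed

lemma Ck_sqrt: "Ck_on k {x::real. x > 0} sqrt"
proof (induction k)
  case 0 then show ?case by (auto intro!: continuous_on_real_sqrt continuous_on_id)
next
  case (Suc k)
  have d: "\<forall>x\<in>{x::real. x > 0}. (sqrt has_derivative (\<lambda>v. v * (inverse (sqrt x) / 2))) (at x)"
    by (auto intro!: DERIV_real_sqrt[THEN DERIV_compose_FDERIV[where g="\<lambda>x. x", OF _ has_derivative_ident], simplified])
  have "Ck_on k {x::real. x > 0} (\<lambda>x. v * (inverse (sqrt x) / 2))" for v
  proof -
    have "Ck_on k {x::real. x > 0} (\<lambda>x. inverse (sqrt x))"
      by (rule Ck_compose[OF _ _ Ck_inverse Suc]) (auto simp: open_Collect_neq open_Collect_less)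
    then have "Ck_on k {x::real. x > 0} (\<lambda>x. (v/2) * inverse (sqrt x))"
      by (intro Ck_bilinear[OF bounded_bilinear_mult] Ck_const)
    then show ?thesis by (rule Ck_cong[rotated 2]) (auto simp: open_Collect_less)
  qed
  then show ?case using d by (intro CkI) auto
qed

lemma smooth_Ck: "smooth_on S f \<Longrightarrow> Ck_on k S f" by (simp add: smooth_on_def)

lemma smooth_const: "smooth_on S (\<lambda>x. c)" by (simp add: smooth_on_def Ck_const)

lemma smooth_add: "smooth_on S f \<Longrightarrow> smooth_on S g \<Longrightarrow> smooth_on S (\<lambda>x. f x + g x)"
  by (simp add: smooth_on_def Ck_add)

lemma smooth_linear: "bounded_linear L \<Longrightarrow> smooth_on S f \<Longrightarrow> smooth_on S (\<lambda>x. L (f x))"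
  by (simp add: smooth_on_def Ck_linear)

lemma smooth_bilinear: "bounded_bilinear b \<Longrightarrow> smooth_on S f \<Longrightarrow> smooth_on S g \<Longrightarrow> smooth_on S (\<lambda>x. b (f x) (g x))"
  by (simp add: smooth_on_def Ck_bilinear)

lemma smooth_id: "smooth_on S (\<lambda>x. x)"
  unfolding smooth_on_def
proof -
  have "Ck_on k S (\<lambda>x. x)" for k
  proof (induction k)
    case 0 then show ?case by (simp add: continuous_on_id)
  next
    case (Suc k)
    have "\<forall>x\<in>S. ((\<lambda>x. x) has_derivative (\<lambda>v. v)) (at x)" by simp
    then show ?case by (rule CkI) (simp add: Ck_const)
  qed
  then show "\<forall>k. Ck_on k S (\<lambda>x. x)" by blast
qed

lemma smooth_subset: "smooth_on S f \<Longrightarrow> T \<subseteq> S \<Longrightarrow> smooth_on T f"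
  using Ck_subset by (metis smooth_on_def)

lemma smooth_cong: "open S \<Longrightarrow> (\<And>x. x \<in> S \<Longrightarrow> f x = g x) \<Longrightarrow> smooth_on S f \<Longrightarrow> smooth_on S g"
  using Ck_cong by (metis smooth_on_def)

lemma smooth_sum: "finite I \<Longrightarrow> (\<And>i. i \<in> I \<Longrightarrow> smooth_on S (f i)) \<Longrightarrow> smooth_on S (\<lambda>x. \<Sum>i\<in>I. f i x)"
  by (simp add: smooth_on_def Ck_sum)

lemma smooth_prod: "finite I \<Longrightarrow> (\<And>i. i \<in> I \<Longrightarrow> smooth_on S (f i)) \<Longrightarrow> smooth_on S (\<lambda>x. \<Prod>i\<in>I. (f i x::real))"
  by (simp add: smooth_on_def Ck_prod)

lemma smooth_compose:
  fixes g :: "'b::euclidean_space \<Rightarrow> 'c::real_normed_vector" and f :: "'a::real_normed_vector \<Rightarrow> 'b"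
  shows "open S \<Longrightarrow> open T \<Longrightarrow> smooth_on T g \<Longrightarrow> smooth_on S f \<Longrightarrow> f ` S \<subseteq> T \<Longrightarrow> smooth_on S (\<lambda>x. g (f x))"
  by (simp add: smooth_on_def Ck_compose)

lemma smooth_mult: "smooth_on S f \<Longrightarrow> smooth_on S g \<Longrightarrow> smooth_on S (\<lambda>x. (f x::real) * g x)"
  by (rule smooth_bilinear[OF bounded_bilinear_mult])

lemma smooth_scaleR: "smooth_on S f \<Longrightarrow> smooth_on S g \<Longrightarrow> smooth_on S (\<lambda>x. f x *\<^sub>R g x)"
  by (rule smooth_bilinear[OF bounded_bilinear_scaleR])

lemma smooth_inner: "smooth_on S f \<Longrightarrow> smooth_on S g \<Longrightarrow> smooth_on S (\<lambda>x. f x \<bullet> g x)"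
  by (rule smooth_bilinear[OF bounded_bilinear_inner])

lemma smooth_minus: "smooth_on S f \<Longrightarrow> smooth_on S (\<lambda>x. - f x)"
  using smooth_linear[OF bounded_linear_minus[OF bounded_linear_ident]] by blast

lemma smooth_diff: "smooth_on S f \<Longrightarrow> smooth_on S g \<Longrightarrow> smooth_on S (\<lambda>x. f x - g x)"
proof -
  assume "smooth_on S f" "smooth_on S g"
  then have "smooth_on S (\<lambda>x. f x + - g x)" by (intro smooth_add smooth_minus)
  then show ?thesis by simp
qed

lemma smooth_fst: "smooth_on S f \<Longrightarrow> smooth_on S (\<lambda>x. fst (f x))"
  by (rule smooth_linear[OF bounded_linear_fst])

lemma smooth_snd: "smooth_on S f \<Longrightarrow> smooth_on S (\<lambda>x. snd (f x))"
  by (rule smooth_linear[OF bounded_linear_snd])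

lemma smooth_nth: "smooth_on S f \<Longrightarrow> smooth_on S (\<lambda>x. f x $ i)"
  by (rule smooth_linear[OF bounded_linear_vec_nth])

lemma smooth_Pair: "smooth_on S f \<Longrightarrow> smooth_on S g \<Longrightarrow> smooth_on S (\<lambda>x. (f x, g x))"
proof -
  assume f: "smooth_on S f" and g: "smooth_on S g"
  have "smooth_on S (\<lambda>x. (f x, 0) + (0, g x))"
    by (intro smooth_add smooth_linear[OF bounded_linear_Pair[OF bounded_linear_ident bounded_linear_zero] f]
        smooth_linear[OF bounded_linear_Pair[OF bounded_linear_zero bounded_linear_ident] g])
  then show ?thesis by simp
qed

lemma smooth_vec:
  fixes f :: "'n::finite \<Rightarrow> 'a::real_normed_vector \<Rightarrow> real"
  shows "(\<And>i. smooth_on S (f i)) \<Longrightarrow> smooth_on S (\<lambda>x. \<chi> i. f i x)"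
proof -
  assume f: "\<And>i. smooth_on S (f i)"
  have "smooth_on S (\<lambda>x. \<Sum>i\<in>UNIV. f i x *\<^sub>R (axis i 1 :: real^'n))"
    by (intro smooth_sum smooth_scaleR f smooth_const) auto
  moreover have "(\<Sum>i\<in>UNIV. f i x *\<^sub>R (axis i 1 :: real^'n)) = (\<chi> i. f i x)" for x
    by (simp add: vec_eq_iff axis_def if_distrib cong: if_cong)
  ultimately show ?thesis by simp
qed

lemma smooth_mink: "smooth_on S f \<Longrightarrow> smooth_on S g \<Longrightarrow> smooth_on S (\<lambda>x. mink (f x) (g x))"
  unfolding mink_def by (intro smooth_diff smooth_inner smooth_mult smooth_fst smooth_snd)

lemma smooth_det: "(\<And>i j. smooth_on S (\<lambda>x. A x $ i $ j)) \<Longrightarrow> smooth_on S (\<lambda>x. det (A x :: real^'n^'n))"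
  unfolding det_def by (intro smooth_sum smooth_mult smooth_const smooth_prod) auto

lemma smooth_inverse: "open S \<Longrightarrow> smooth_on S f \<Longrightarrow> (\<And>x. x \<in> S \<Longrightarrow> f x \<noteq> 0) \<Longrightarrow> smooth_on S (\<lambda>x. inverse (f x :: real))"
  by (rule smooth_compose[where T="{x. x \<noteq> 0}"]) (auto simp: smooth_on_def Ck_inverse open_Collect_neq)

lemma smooth_divide: "open S \<Longrightarrow> smooth_on S f \<Longrightarrow> smooth_on S g \<Longrightarrow> (\<And>x. x \<in> S \<Longrightarrow> g x \<noteq> 0) \<Longrightarrow> smooth_on S (\<lambda>x. f x / (g x :: real))"
  unfolding divide_inverse by (intro smooth_mult smooth_inverse)

lemma smooth_sqrt: "open S \<Longrightarrow> smooth_on S f \<Longrightarrow> (\<And>x. x \<in> S \<Longrightarrow> f x > 0) \<Longrightarrow> smooth_on S (\<lambda>x. sqrt (f x))"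
  by (rule smooth_compose[where T="{x. x > 0}"]) (auto simp: smooth_on_def Ck_sqrt open_Collect_less)

lemma smooth_continuous: "smooth_on S f \<Longrightarrow> continuous_on S f"
  using smooth_Ck[of S f 0] by simp

lemma smooth_has_derivative:
  assumes "open S" "smooth_on S f" "x \<in> S"
  shows "(f has_derivative frechet_derivative f (at x)) (at x)"
proof -
  from smooth_Ck[OF assms(2), of 1] obtain f' where "\<forall>x\<in>S. (f has_derivative f' x) (at x)" by auto
  then show ?thesis using assms(3) frechet_derivative_at by metis
qed

lemma smooth_frechet_derivative:
  assumes "open S" "smooth_on S f"
  shows "smooth_on S (\<lambda>x. frechet_derivative f (at x) v)"
  unfolding smooth_on_def
proof
  fix k
  from smooth_Ck[OF assms(2), of "Suc k"] obtain f' where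
    d: "\<forall>x\<in>S. (f has_derivative f' x) (at x)" "\<forall>v. Ck_on k S (\<lambda>x. f' x v)" by auto
  show "Ck_on k S (\<lambda>x. frechet_derivative f (at x) v)"
    by (rule Ck_cong[OF assms(1) _ d(2)[rule_format, of v]]) (use d(1) frechet_derivative_at in metis)
qed

text \<open>The proof compares the mixed second difference
  \<open>f(x+sa+sb) - f(x+sa) - f(x+sb) + f(x)\<close> with \<open>s\<^sup>2 D_a(b)\<close> and with \<open>s\<^sup>2 D_b(a)\<close>.\<close>

lemma second_difference_mvt:
  fixes f :: "'a::real_normed_vector \<Rightarrow> real"
  assumes f': "\<And>y. y \<in> S \<Longrightarrow> (f has_derivative f' y) (at y)"
    and s: "s > 0"
    and inS: "\<And>\<tau>. 0 \<le> \<tau> \<Longrightarrow> \<tau> \<le> s \<Longrightarrow> x + \<tau> *\<^sub>R a + s *\<^sub>R b \<in> S \<and> x + \<tau> *\<^sub>R a \<in> S"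
  obtains \<xi> where "\<xi> \<in> {0<..<s}"
    "(f (x + s *\<^sub>R a + s *\<^sub>R b) - f (x + s *\<^sub>R a)) - (f (x + s *\<^sub>R b) - f x)
       = s * (f' (x + \<xi> *\<^sub>R a + s *\<^sub>R b) a - f' (x + \<xi> *\<^sub>R a) a)"
proof -
  define \<phi> where "\<phi> \<tau> = f (x + \<tau> *\<^sub>R a + s *\<^sub>R b) - f (x + \<tau> *\<^sub>R a)" for \<tau>
  have lin: "f' y (h *\<^sub>R a) = h * f' y a" if "y \<in> S" for y h
    using linear_cmul[OF has_derivative_linear[OF f'[OF that]]] by simp
  have "(\<phi> has_derivative (\<lambda>h. h * (f' (x + \<tau> *\<^sub>R a + s *\<^sub>R b) a - f' (x + \<tau> *\<^sub>R a) a)))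
      (at \<tau> within {0..s})" if "0 \<le> \<tau>" "\<tau> \<le> s" for \<tau>
  proof -
    have p1: "x + \<tau> *\<^sub>R a + s *\<^sub>R b \<in> S" and p2: "x + \<tau> *\<^sub>R a \<in> S" using inS that by auto
    have "((\<lambda>t. x + t *\<^sub>R a + s *\<^sub>R b) has_derivative (\<lambda>h. h *\<^sub>R a)) (at \<tau>)"
      "((\<lambda>t. x + t *\<^sub>R a) has_derivative (\<lambda>h. h *\<^sub>R a)) (at \<tau>)"
      by (auto intro!: derivative_eq_intros)
    from has_derivative_diff[OF diff_chain_at[OF this(1) f'[OF p1]] diff_chain_at[OF this(2) f'[OF p2]]]
    have "(\<phi> has_derivative (\<lambda>h. f' (x + \<tau> *\<^sub>R a + s *\<^sub>R b) (h *\<^sub>R a) - f' (x + \<tau> *\<^sub>R a) (h *\<^sub>R a))) (at \<tau>)"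
      by (simp add: o_def \<phi>_def[abs_def])
    then have "(\<phi> has_derivative (\<lambda>h. h * (f' (x + \<tau> *\<^sub>R a + s *\<^sub>R b) a - f' (x + \<tau> *\<^sub>R a) a))) (at \<tau>)"
      by (simp add: lin[OF p1] lin[OF p2] right_diff_distrib)
    then show ?thesis by (rule has_derivative_at_withinI)
  qed
  from mvt_simple[OF s this] obtain \<xi> where "\<xi> \<in> {0<..<s}"
    "\<phi> s - \<phi> 0 = (s - 0) * (f' (x + \<xi> *\<^sub>R a + s *\<^sub>R b) a - f' (x + \<xi> *\<^sub>R a) a)"
    by blast
  then show ?thesis using that by (simp add: \<phi>_def)
qed

lemma second_difference_estimate:
  fixes f :: "'a::real_normed_vector \<Rightarrow> real"
  assumes f': "\<And>y. y \<in> S \<Longrightarrow> (f has_derivative f' y) (at y)"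
    and s: "s > 0"
    and inS: "\<And>\<tau>. 0 \<le> \<tau> \<Longrightarrow> \<tau> \<le> s \<Longrightarrow> x + \<tau> *\<^sub>R a + s *\<^sub>R b \<in> S \<and> x + \<tau> *\<^sub>R a \<in> S"
    and est: "\<And>y. norm (y - x) < d \<Longrightarrow> \<bar>f' y a - f' x a - Da (y - x)\<bar> \<le> e * norm (y - x)"
    and sd: "s * (norm a + norm b) < d"
    and Da: "linear Da" and e: "e \<ge> 0"
  shows "\<bar>(f (x + s *\<^sub>R a + s *\<^sub>R b) - f (x + s *\<^sub>R a)) - (f (x + s *\<^sub>R b) - f x) - s\<^sup>2 * Da b\<bar>
           \<le> 2 * e * s\<^sup>2 * (norm a + norm b)"
proof -
  obtain \<xi> where \<xi>: "\<xi> \<in> {0<..<s}"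
    "(f (x + s *\<^sub>R a + s *\<^sub>R b) - f (x + s *\<^sub>R a)) - (f (x + s *\<^sub>R b) - f x)
       = s * (f' (x + \<xi> *\<^sub>R a + s *\<^sub>R b) a - f' (x + \<xi> *\<^sub>R a) a)"
    using second_difference_mvt[OF f' s inS] by blast
  define p1 where "p1 = x + \<xi> *\<^sub>R a + s *\<^sub>R b"
  define p2 where "p2 = x + \<xi> *\<^sub>R a"
  have "norm (p1 - x) \<le> \<xi> * norm a + s * norm b"
    using norm_triangle_ineq[of "\<xi> *\<^sub>R a" "s *\<^sub>R b"] \<xi>(1) s by (simp add: p1_def)
  also have "\<dots> \<le> s * (norm a + norm b)"
    using \<xi>(1) by (simp add: distrib_left mult_right_mono)
  finally have n1: "norm (p1 - x) \<le> s * (norm a + norm b)" .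
  have n2: "norm (p2 - x) \<le> s * (norm a + norm b)"
    using \<xi>(1) by (simp add: p2_def distrib_left mult_right_mono add_increasing2)
  have e1: "\<bar>f' p1 a - f' x a - Da (p1 - x)\<bar> \<le> e * norm (p1 - x)"
    using n1 sd by (intro est) linarith
  have e2: "\<bar>f' p2 a - f' x a - Da (p2 - x)\<bar> \<le> e * norm (p2 - x)"
    using n2 sd by (intro est) linarith
  have "Da (p1 - x) - Da (p2 - x) = Da ((p1 - x) - (p2 - x))" using Da by (simp add: linear_diff)
  also have "(p1 - x) - (p2 - x) = s *\<^sub>R b" by (simp add: p1_def p2_def)
  finally have "Da (p1 - x) - Da (p2 - x) = s * Da b" using Da by (simp add: linear_cmul)
  then have "\<bar>f' p1 a - f' p2 a - s * Da b\<bar> \<le> e * norm (p1 - x) + e * norm (p2 - x)"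
    using e1 e2 by linarith
  also have "\<dots> \<le> 2 * e * (s * (norm a + norm b))"
    using mult_left_mono[OF n1 e] mult_left_mono[OF n2 e] by linarith
  finally have B: "\<bar>f' p1 a - f' p2 a - s * Da b\<bar> \<le> 2 * e * (s * (norm a + norm b))" .
  have "(f (x + s *\<^sub>R a + s *\<^sub>R b) - f (x + s *\<^sub>R a)) - (f (x + s *\<^sub>R b) - f x) - s\<^sup>2 * Da b
      = s * (f' p1 a - f' p2 a - s * Da b)"
    using \<xi>(2) by (simp add: p1_def p2_def power2_eq_square algebra_simps)
  then have "\<bar>(f (x + s *\<^sub>R a + s *\<^sub>R b) - f (x + s *\<^sub>R a)) - (f (x + s *\<^sub>R b) - f x) - s\<^sup>2 * Da b\<bar>
      = s * \<bar>f' p1 a - f' p2 a - s * Da b\<bar>"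
    using s by (simp add: abs_mult)
  also have "\<dots> \<le> s * (2 * e * (s * (norm a + norm b)))" using B s by (simp add: mult_left_mono)
  finally show ?thesis by (simp add: power2_eq_square algebra_simps)
qed

lemma segment_points_in_ball:
  fixes x u v :: "'a::real_normed_vector"
  assumes "s * K < r" "0 \<le> \<tau>" "\<tau> \<le> s" "norm u + norm v = K"
  shows "x + \<tau> *\<^sub>R u + s *\<^sub>R v \<in> ball x r" "x + \<tau> *\<^sub>R u \<in> ball x r"
proof -
  have s0: "s \<ge> 0" using assms(2,3) by linarith
  have "norm (\<tau> *\<^sub>R u + s *\<^sub>R v) \<le> \<tau> * norm u + s * norm v"
    using norm_triangle_ineq[of "\<tau> *\<^sub>R u" "s *\<^sub>R v"] assms(2) s0 by simp
  also have "\<dots> \<le> s * norm u + s * norm v" using assms(3) by (simp add: mult_right_mono)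
  also have "\<dots> = s * K" using assms(4) distrib_left[of s "norm u" "norm v"] by simp
  finally have "norm (\<tau> *\<^sub>R u + s *\<^sub>R v) < r" using assms(1) by linarith
  moreover have "norm (- (\<tau> *\<^sub>R u) - s *\<^sub>R v) = norm (\<tau> *\<^sub>R u + s *\<^sub>R v)"
    by (metis minus_add_distrib norm_minus_cancel diff_conv_add_uminus)
  ultimately show "x + \<tau> *\<^sub>R u + s *\<^sub>R v \<in> ball x r" by (simp add: dist_norm add.assoc)
  have nuK: "norm u \<le> K" using assms(4) norm_ge_zero[of v] by linarith
  have "\<tau> * norm u \<le> s * K" using mult_mono[OF assms(3) nuK] assms(2,3) by simp
  then show "x + \<tau> *\<^sub>R u \<in> ball x r" using assms(1,2) by (simp add: dist_norm)
qed

lemma schwarz_estimate: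
  fixes f :: "'a::real_normed_vector \<Rightarrow> real"
  assumes S: "open S" "x \<in> S"
    and f': "\<And>y. y \<in> S \<Longrightarrow> (f has_derivative f' y) (at y)"
    and Da: "((\<lambda>y. f' y a) has_derivative Da) (at x)"
    and Db: "((\<lambda>y. f' y b) has_derivative Db) (at x)"
    and e: "e > 0"
  shows "\<bar>Da b - Db a\<bar> \<le> 4 * e * (norm a + norm b)"
proof -
  define K where "K = norm a + norm b"
  obtain d1 where d1: "d1 > 0" "\<And>y. norm (y - x) < d1 \<Longrightarrow> norm (f' y a - f' x a - Da (y - x)) \<le> e * norm (y - x)"
    using Da e unfolding has_derivative_at_alt by blast
  obtain d2 where d2: "d2 > 0" "\<And>y. norm (y - x) < d2 \<Longrightarrow> norm (f' y b - f' x b - Db (y - x)) \<le> e * norm (y - x)"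
    using Db e unfolding has_derivative_at_alt by blast
  obtain r where r: "r > 0" "ball x r \<subseteq> S" using S open_contains_ball by blast
  define m where "m = min (min d1 d2) r"
  define s where "s = m / (2 * (K + 1))"
  have K0: "K \<ge> 0" and m0: "m > 0" using d1 d2 r by (simp_all add: K_def m_def)
  then have s0: "s > 0" by (simp add: s_def)
  have "s * K \<le> m / 2" using m0 K0 by (simp add: s_def field_simps)
  then have sK: "s * K < m" using m0 by linarith
  have inS: "x + \<tau> *\<^sub>R u + s *\<^sub>R v \<in> S \<and> x + \<tau> *\<^sub>R u \<in> S"
    if "0 \<le> \<tau>" "\<tau> \<le> s" "norm u + norm v = K" for \<tau> u v
    using segment_points_in_ball[of s K r \<tau> u v x] that sK r(2) by (auto simp: m_def)
  have sd1: "s * (norm a + norm b) < d1" and sd2: "s * (norm b + norm a) < d2"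
    using sK by (simp_all add: K_def m_def add.commute)
  have A: "\<bar>(f (x + s *\<^sub>R a + s *\<^sub>R b) - f (x + s *\<^sub>R a)) - (f (x + s *\<^sub>R b) - f x) - s\<^sup>2 * Da b\<bar>
           \<le> 2 * e * s\<^sup>2 * (norm a + norm b)"
    by (rule second_difference_estimate[OF f' s0 _ _ sd1 has_derivative_linear[OF Da]])
      (use inS K_def d1(2) e in auto)
  have B: "\<bar>(f (x + s *\<^sub>R b + s *\<^sub>R a) - f (x + s *\<^sub>R b)) - (f (x + s *\<^sub>R a) - f x) - s\<^sup>2 * Db a\<bar>
           \<le> 2 * e * s\<^sup>2 * (norm b + norm a)"
    by (rule second_difference_estimate[OF f' s0 _ _ sd2 has_derivative_linear[OF Db]])
      (use inS K_def d2(2) e in \<open>auto simp: add.commute\<close>)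
  have eq: "x + s *\<^sub>R b + s *\<^sub>R a = x + s *\<^sub>R a + s *\<^sub>R b" by (simp add: algebra_simps)
  define Q where "Q = (f (x + s *\<^sub>R a + s *\<^sub>R b) - f (x + s *\<^sub>R a)) - (f (x + s *\<^sub>R b) - f x)"
  have A': "\<bar>Q - s\<^sup>2 * Da b\<bar> \<le> 2 * e * s\<^sup>2 * K" using A by (simp add: Q_def K_def)
  have B': "\<bar>Q - s\<^sup>2 * Db a\<bar> \<le> 2 * e * s\<^sup>2 * K" using B unfolding eq
    by (simp add: Q_def K_def algebra_simps)
  have "\<bar>s\<^sup>2 * (Da b - Db a)\<bar> \<le> 4 * e * s\<^sup>2 * K"
    using A' B' by (simp add: right_diff_distrib)
  then have "s\<^sup>2 * \<bar>Da b - Db a\<bar> \<le> s\<^sup>2 * (4 * e * K)"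
    by (simp only: abs_mult abs_power2 mult.commute mult.left_commute)
  then show ?thesis using s0 by (simp add: K_def)
qed

lemma schwarz_real:
  fixes f :: "'a::real_normed_vector \<Rightarrow> real"
  assumes S: "open S" "x \<in> S"
    and f': "\<And>y. y \<in> S \<Longrightarrow> (f has_derivative f' y) (at y)"
    and Da: "((\<lambda>y. f' y a) has_derivative Da) (at x)"
    and Db: "((\<lambda>y. f' y b) has_derivative Db) (at x)"
  shows "Da b = Db a"
proof (rule ccontr)
  define K where "K = norm a + norm b"
  define d where "d = \<bar>Da b - Db a\<bar>"
  assume "Da b \<noteq> Db a"
  then have d0: "d > 0" and K0: "K \<ge> 0" by (simp_all add: d_def K_def)
  then have "d / (8 * (K + 1)) > 0" by simp
  then have "d \<le> 4 * (d / (8 * (K + 1))) * K"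
    using schwarz_estimate[OF S f' Da Db] unfolding d_def K_def by blast
  also have "\<dots> = d * (K / (2 * (K + 1)))" using K0 by (simp add: field_simps)
  also have "\<dots> < d * 1" using d0 K0 by (intro mult_strict_left_mono) (simp_all add: field_simps)
  finally show False by simp
qed

lemma schwarz:
  fixes f :: "'a::real_normed_vector \<Rightarrow> 'b::euclidean_space"
  assumes S: "open S" "x \<in> S"
    and f': "\<And>y. y \<in> S \<Longrightarrow> (f has_derivative f' y) (at y)"
    and Da: "((\<lambda>y. f' y a) has_derivative Da) (at x)"
    and Db: "((\<lambda>y. f' y b) has_derivative Db) (at x)"
  shows "Da b = Db a"
proof (rule euclidean_eqI)
  fix c :: 'b assume "c \<in> Basis"
  have f'': "((\<lambda>y. f y \<bullet> c) has_derivative (\<lambda>h. f' y h \<bullet> c)) (at y)" if "y \<in> S" for y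
    using bounded_linear.has_derivative[OF bounded_linear_inner_left f'[OF that]] .
  have Da': "((\<lambda>y. f' y a \<bullet> c) has_derivative (\<lambda>h. Da h \<bullet> c)) (at x)"
    using bounded_linear.has_derivative[OF bounded_linear_inner_left Da] .
  have Db': "((\<lambda>y. f' y b \<bullet> c) has_derivative (\<lambda>h. Db h \<bullet> c)) (at x)"
    using bounded_linear.has_derivative[OF bounded_linear_inner_left Db] .
  show "Da b \<bullet> c = Db a \<bullet> c"
    using schwarz_real[OF S f'' Da' Db'] by simp
qed

lemma mink_inner: "mink p q = p \<bullet> (fst q, - snd q)"
  by (cases p, cases q) (simp add: mink_def)

lemma bounded_bilinear_mink: "bounded_bilinear (mink :: 'n::finite pt \<Rightarrow> 'n pt \<Rightarrow> real)"
proof -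
  have "bounded_bilinear (\<lambda>x y. inner (id x) ((\<lambda>q. (fst q, - snd q)) (y :: 'n pt)) :: real)"
    by (rule bounded_bilinear.comp[OF bounded_bilinear_inner bounded_linear_ident[unfolded id_def[symmetric]]])
       (intro bounded_linear_Pair bounded_linear_fst bounded_linear_minus bounded_linear_snd)
  then show ?thesis by (simp add: mink_inner[abs_def])
qed

lemma mink_sym: "mink p q = mink q p"
  by (simp add: mink_def inner_commute mult.commute)

lemmas mink_add_left = bounded_bilinear.add_left[OF bounded_bilinear_mink]
lemmas mink_add_right = bounded_bilinear.add_right[OF bounded_bilinear_mink]
lemmas mink_diff_left = bounded_bilinear.diff_left[OF bounded_bilinear_mink]
lemmas mink_diff_right = bounded_bilinear.diff_right[OF bounded_bilinear_mink]
lemmas mink_scaleR_left = bounded_bilinear.scaleR_left[OF bounded_bilinear_mink]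
lemmas mink_scaleR_right = bounded_bilinear.scaleR_right[OF bounded_bilinear_mink]
lemmas mink_sum_left = bounded_bilinear.sum_left[OF bounded_bilinear_mink]
lemmas mink_sum_right = bounded_bilinear.sum_right[OF bounded_bilinear_mink]
lemmas mink_zero_left = bounded_bilinear.zero_left[OF bounded_bilinear_mink]
lemmas mink_minus_right = bounded_bilinear.minus_right[OF bounded_bilinear_mink]

text \<open>Minkowski linear algebra of a frame \<open>X :: 'n \<Rightarrow> 'n pt\<close>. \<open>gram X\<close> is the Gram matrix,
  \<open>amat X\<close> the matrix of spatial parts, \<open>coef X y\<close> the coordinates of the orthogonal
  projection \<open>proj X y\<close> of \<open>y\<close> onto the span of the frame, and \<open>nvec X\<close> the normalised
  component of the time direction \<open>e_time\<close> orthogonal to the frame, which is the future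
  timelike unit normal when the frame is spacelike.\<close>

definition e_time :: "'n::finite pt" where "e_time = (0, 1)"

lemma mink_e_time: "mink z e_time = - snd z"
  by (simp add: mink_def e_time_def)

definition gram :: "('n::finite \<Rightarrow> 'n pt) \<Rightarrow> real^'n^'n" where
  "gram X = (\<chi> i j. mink (X i) (X j))"

definition amat :: "('n::finite \<Rightarrow> 'n pt) \<Rightarrow> real^'n^'n" where
  "amat X = (\<chi> k. fst (X k))"

definition coef :: "('n::finite \<Rightarrow> 'n pt) \<Rightarrow> 'n pt \<Rightarrow> real^'n" where
  "coef X y = transpose (matrix_inv (gram X)) *v (\<chi> i. mink (X i) y)"

definition proj :: "('n::finite \<Rightarrow> 'n pt) \<Rightarrow> 'n pt \<Rightarrow> 'n pt" where
  "proj X y = (\<Sum>j\<in>UNIV. coef X y $ j *\<^sub>R X j)"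

definition wvec :: "('n::finite \<Rightarrow> 'n pt) \<Rightarrow> 'n pt" where
  "wvec X = e_time - proj X e_time"

definition nvec :: "('n::finite \<Rightarrow> 'n pt) \<Rightarrow> 'n pt" where
  "nvec X = wvec X /\<^sub>R sqrt (- mink (wvec X) (wvec X))"

lemma det_nz_inj: "det (M::real^'n::finite^'n) \<noteq> 0 \<Longrightarrow> M *v x = 0 \<Longrightarrow> x = 0"
  using inj_matrix_vector_mult[of M] invertible_det_nz[of M]
  by (metis injD matrix_vector_mult_0_right)

lemma orth_frame_time_zero:
  assumes "det (amat X) \<noteq> 0" "\<And>k. mink z (X k) = 0" "snd z = 0"
  shows "z = 0"
proof -
  have "\<forall>k. (amat X *v fst z) $ k = 0"
  proof
    fix k
    have "(amat X *v fst z) $ k = fst (X k) \<bullet> fst z"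
      by (simp add: amat_def matrix_vector_mult_def inner_vec_def mult.commute)
    also have "\<dots> = mink z (X k)" using assms(3) by (simp add: mink_def inner_commute)
    finally show "(amat X *v fst z) $ k = 0" using assms(2) by simp
  qed
  then have "amat X *v fst z = 0" by (simp add: vec_eq_iff)
  then have "fst z = 0" using det_nz_inj assms(1) by blast
  then show ?thesis using assms(3) by (simp add: prod_eq_iff)
qed

lemma invertible_matrix_inv:
  assumes "invertible M"
  shows "M ** matrix_inv M = mat 1" "matrix_inv M ** M = mat 1"
  using someI_ex[OF assms[unfolded invertible_def]] unfolding matrix_inv_def by auto

lemma proj_prop:
  assumes "det (gram X) \<noteq> 0"
  shows "mink (proj X y) (X k) = mink y (X k)"
proof -
  define gi where "gi = matrix_inv (gram X)"
  define yv where "yv = (\<chi> i. mink (X i) y)"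
  have inv: "gi ** gram X = mat 1" using assms invertible_det_nz invertible_matrix_inv gi_def by blast
  have "mink (proj X y) (X k) = (\<Sum>j\<in>UNIV. coef X y $ j * gram X $ j $ k)"
    by (simp add: proj_def mink_sum_left mink_scaleR_left gram_def)
  also have "\<dots> = (coef X y v* gram X) $ k"
    by (simp add: vector_matrix_mult_def)
  also have "coef X y = yv v* gi" by (simp add: coef_def yv_def gi_def)
  also have "(yv v* gi) v* gram X = yv" by (simp add: vector_matrix_mul_assoc inv)
  finally show ?thesis by (simp add: yv_def mink_sym)
qed

text \<open>Pairing a gradient-type combination \<open>\<Sum>\<^sub>i \<Sum>\<^sub>j g\<^sup>i\<^sup>j d_j X_i\<close> with \<open>y\<close> gives
  \<open>\<Sum>\<^sub>j coef X y $ j * d_j\<close>: the gradient paired with \<open>y\<close> is the derivative in the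
  parameter direction corresponding to \<open>y\<close>.\<close>

lemma coef_nth: "coef X y $ j = (\<Sum>i\<in>UNIV. matrix_inv (gram X) $ i $ j * mink (X i) y)"
  by (simp add: coef_def matrix_vector_mult_def transpose_def)

lemma mink_gradient_coef:
  "mink (\<Sum>i\<in>UNIV. \<Sum>j\<in>UNIV. (matrix_inv (gram X) $ i $ j * d j) *\<^sub>R X i) y
     = (\<Sum>j\<in>UNIV. coef X y $ j * d j)"
proof -
  have "mink (\<Sum>i\<in>UNIV. \<Sum>j\<in>UNIV. (matrix_inv (gram X) $ i $ j * d j) *\<^sub>R X i) y
      = (\<Sum>i\<in>UNIV. \<Sum>j\<in>UNIV. matrix_inv (gram X) $ i $ j * d j * mink (X i) y)"
    by (simp add: mink_sum_left mink_scaleR_left)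
  also have "\<dots> = (\<Sum>j\<in>UNIV. \<Sum>i\<in>UNIV. matrix_inv (gram X) $ i $ j * d j * mink (X i) y)"
    by (rule sum.swap)
  also have "\<dots> = (\<Sum>j\<in>UNIV. coef X y $ j * d j)"
    by (simp add: coef_nth sum_distrib_left sum_distrib_right mult_ac)
  finally show ?thesis .
qed

lemma wvec_orth: "det (gram X) \<noteq> 0 \<Longrightarrow> mink (wvec X) (X k) = 0"
  by (simp add: wvec_def mink_diff_left proj_prop)

lemma orth_span: "(\<And>k. mink z (X k) = 0) \<Longrightarrow> mink z (\<Sum>j\<in>UNIV. c j *\<^sub>R X j) = 0"
  by (simp add: mink_sum_right mink_scaleR_right)

lemma wvec_square: "det (gram X) \<noteq> 0 \<Longrightarrow> mink (wvec X) (wvec X) = - snd (wvec X)"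
proof -
  assume d: "det (gram X) \<noteq> 0"
  have "mink (wvec X) (wvec X) = mink (wvec X) e_time - mink (wvec X) (proj X e_time)"
    by (simp add: wvec_def mink_diff_right)
  also have "mink (wvec X) (proj X e_time) = 0"
    unfolding proj_def by (rule orth_span) (rule wvec_orth[OF d])
  finally show ?thesis by (simp add: mink_e_time)
qed

lemma nvec_props:
  assumes d: "det (gram X) \<noteq> 0" and w: "mink (wvec X) (wvec X) < 0"
  shows "\<And>k. mink (nvec X) (X k) = 0" "mink (nvec X) (nvec X) = -1" "snd (nvec X) > 0"
proof -
  define c where "c = sqrt (- mink (wvec X) (wvec X))"
  have c0: "c > 0" using w by (simp add: c_def)
  have cc: "c * c = - mink (wvec X) (wvec X)" using w by (simp add: c_def)
  show "mink (nvec X) (X k) = 0" for k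
    by (simp add: nvec_def mink_scaleR_left wvec_orth[OF d])
  show "mink (nvec X) (nvec X) = -1"
    using c0 cc w by (simp add: nvec_def mink_scaleR_left mink_scaleR_right c_def[symmetric] field_simps)
  show "snd (nvec X) > 0"
    using c0 w wvec_square[OF d] by (simp add: nvec_def c_def[symmetric])
qed

lemma normal_frame_zero:
  assumes dg: "det (gram X) \<noteq> 0" and da: "det (amat X) \<noteq> 0" and w: "mink (wvec X) (wvec X) < 0"
    and z: "\<And>k. mink z (X k) = 0" "mink z (nvec X) = 0"
  shows "z = 0"
proof (rule orth_frame_time_zero[OF da z(1)])
  have c0: "sqrt (- mink (wvec X) (wvec X)) > 0" using w by simp
  have "mink z (wvec X) = 0" using z(2) c0 by (simp add: nvec_def mink_scaleR_right)
  moreover have "mink z (proj X e_time) = 0" unfolding proj_def by (rule orth_span[OF z(1)])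
  ultimately have "mink z e_time = 0" by (simp add: wvec_def mink_diff_right)
  then show "snd z = 0" by (simp add: mink_e_time)
qed

lemma nvec_unique:
  assumes dg: "det (gram X) \<noteq> 0" and da: "det (amat X) \<noteq> 0" and w: "mink (wvec X) (wvec X) < 0"
    and n: "\<And>k. mink n (X k) = 0" "mink n n = -1" "snd n > 0"
  shows "n = nvec X"
proof -
  note N = nvec_props[OF dg w]
  define c where "c = - mink n (nvec X)"
  have "n - c *\<^sub>R nvec X = 0"
  proof (rule normal_frame_zero[OF dg da w])
    show "mink (n - c *\<^sub>R nvec X) (X k) = 0" for k using n(1) N(1) by (simp add: mink_diff_left mink_scaleR_left)
    show "mink (n - c *\<^sub>R nvec X) (nvec X) = 0" using N(2) by (simp add: mink_diff_left mink_add_left mink_scaleR_left c_def)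
  qed
  then have nc: "n = c *\<^sub>R nvec X" by simp
  then have "c * c = 1" using n(2) N(2) by (simp add: mink_scaleR_left mink_scaleR_right)
  moreover have "c > 0" using n(3) N(3) nc by (simp add: zero_less_mult_iff)
  ultimately have "c = 1" by (metis abs_of_pos abs_square_eq_1 power2_eq_square)
  then show ?thesis using nc by simp
qed

lemma normal_orth_in_span:
  assumes "det (gram X) \<noteq> 0" "det (amat X) \<noteq> 0" "mink (wvec X) (wvec X) < 0"
    and "mink y (nvec X) = 0"
  shows "y = (\<Sum>j\<in>UNIV. coef X y $ j *\<^sub>R X j)"
proof -
  have "y - proj X y = 0"
  proof (rule normal_frame_zero[OF assms(1-3)])
    show "mink (y - proj X y) (X k) = 0" for k by (simp add: mink_diff_left proj_prop[OF assms(1)])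
    have "mink (nvec X) (proj X y) = 0"
      unfolding proj_def by (rule orth_span) (rule nvec_props(1)[OF assms(1,3)])
    then have "mink (proj X y) (nvec X) = 0" by (simp add: mink_sym)
    then show "mink (y - proj X y) (nvec X) = 0" using assms(4) by (simp add: mink_diff_left)
  qed
  then show ?thesis by (simp add: proj_def)
qed

lemma gram_quadratic_form: "v \<bullet> (gram X *v v) = mink (\<Sum>i\<in>UNIV. v $ i *\<^sub>R X i) (\<Sum>j\<in>UNIV. v $ j *\<^sub>R X j)"
  by (simp add: gram_def inner_vec_def matrix_vector_mult_def mink_sum_left mink_sum_right
      mink_scaleR_left mink_scaleR_right sum_distrib_left mult.assoc)
     (simp add: mink_sym ac_simps)

lemma posdef_det_gram:
  assumes pd: "\<And>v. v \<noteq> 0 \<Longrightarrow> v \<bullet> (gram X *v v) > 0"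
  shows "det (gram X) \<noteq> 0"
proof
  assume "det (gram X) = 0"
  then have "\<not> inj ((*v) (gram X))"
    using det_nz_iff_inj[of "(*v) (gram X)"] by (simp add: matrix_vector_mul_linear)
  then obtain x y where "gram X *v x = gram X *v y" "x \<noteq> y" unfolding inj_def by blast
  then have "gram X *v (x - y) = 0" "x - y \<noteq> 0" by (simp_all add: matrix_vector_mult_diff_distrib)
  then show False using pd[of "x - y"] by simp
qed

lemma posdef_det_amat:
  assumes pd: "\<And>v. v \<noteq> 0 \<Longrightarrow> v \<bullet> (gram X *v v) > 0"
  shows "det (amat X) \<noteq> 0"
proof
  assume "det (amat X) = 0"
  then have "det (transpose (amat X)) = 0" by (simp add: det_transpose)
  then have "\<not> inj ((*v) (transpose (amat X)))"
    using det_nz_iff_inj[of "(*v) (transpose (amat X))"] by (simp add: matrix_vector_mul_linear)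
  then obtain x y where "transpose (amat X) *v x = transpose (amat X) *v y" "x \<noteq> y" unfolding inj_def by blast
  then have z: "transpose (amat X) *v (x - y) = 0" "x - y \<noteq> 0" by (simp_all add: matrix_vector_mult_diff_distrib)
  define v where "v = x - y"
  have "fst (\<Sum>i\<in>UNIV. v $ i *\<^sub>R X i) = transpose (amat X) *v v"
    by (simp add: fst_sum vec_eq_iff amat_def matrix_vector_mult_def transpose_def mult.commute)
  then have "fst (\<Sum>i\<in>UNIV. v $ i *\<^sub>R X i) = 0" using z by (simp add: v_def)
  then have "v \<bullet> (gram X *v v) \<le> 0" by (simp add: gram_quadratic_form mink_def)
  then show False using pd[of v] z(2) v_def by simp
qed

lemma posdef_wvec:
  fixes X :: "'n::finite \<Rightarrow> 'n pt"
  assumes pd: "\<And>v. v \<noteq> 0 \<Longrightarrow> v \<bullet> (gram X *v v) > 0"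
  shows "mink (wvec X) (wvec X) < 0"
proof -
  have dg: "det (gram X) \<noteq> 0" by (rule posdef_det_gram[OF pd])
  define P where "P = proj X e_time"
  have nn: "mink P P \<ge> 0"
  proof (cases "coef X e_time = 0")
    case True then show ?thesis by (simp add: P_def proj_def mink_zero_left)
  next
    case False
    then show ?thesis using pd[OF False] by (simp add: gram_quadratic_form P_def proj_def)
  qed
  have o: "mink (wvec X) P = 0" unfolding P_def proj_def by (rule orth_span) (rule wvec_orth[OF dg])
  have e: "e_time = wvec X + P" by (simp add: wvec_def P_def)
  have "mink (wvec X + P) (wvec X + P) = mink (wvec X) (wvec X) + 2 * mink (wvec X) P + mink P P"
    by (simp add: mink_add_left mink_add_right mink_sym[of P "wvec X"])
  then have "mink (e_time::'n pt) e_time = mink (wvec X) (wvec X) + 2 * mink (wvec X) P + mink P P"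
    using e by metis
  moreover have "mink (e_time::'n pt) e_time = -1" by (simp add: mink_def e_time_def)
  ultimately have "-1 = mink (wvec X) (wvec X) + mink P P" using o by simp
  then show ?thesis using nn by linarith
qed

text \<open>For a smooth map \<open>F\<close> on an open set \<open>W\<close> of (parameter,
  time) space, \<open>XF\<close>, \<open>NF\<close>, \<open>HF\<close>, \<open>SF\<close> are the frame, normal, mean curvature and
  support function at each point, defined without reference to slices.\<close>

definition e_space :: "'n::finite \<Rightarrow> 'n pt" where "e_space i = (axis i 1, 0)"

definition XF :: "('n::finite pt \<Rightarrow> 'n pt) \<Rightarrow> 'n pt \<Rightarrow> 'n \<Rightarrow> 'n pt" where
  "XF F q i = frechet_derivative F (at q) (e_space i)"

definition NF :: "('n::finite pt \<Rightarrow> 'n pt) \<Rightarrow> 'n pt \<Rightarrow> 'n pt" where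
  "NF F q = nvec (XF F q)"

definition HF :: "('n::finite pt \<Rightarrow> 'n pt) \<Rightarrow> 'n pt \<Rightarrow> real" where
  "HF F q = (\<Sum>i\<in>UNIV. \<Sum>j\<in>UNIV. matrix_inv (gram (XF F q)) $ i $ j *
      mink (frechet_derivative (NF F) (at q) (e_space i)) (XF F q j))"

definition SF :: "('n::finite pt \<Rightarrow> 'n pt) \<Rightarrow> 'n pt \<Rightarrow> real" where
  "SF F q = - mink (F q) (NF F q)"

definition frame_region :: "('n::finite pt \<Rightarrow> 'n pt) \<Rightarrow> 'n pt set \<Rightarrow> 'n pt set" where
  "frame_region F W = {q \<in> W. det (gram (XF F q)) \<noteq> 0 \<and> det (amat (XF F q)) \<noteq> 0}"

definition normal_region :: "('n::finite pt \<Rightarrow> 'n pt) \<Rightarrow> 'n pt set \<Rightarrow> 'n pt set" where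
  "normal_region F W = {q \<in> frame_region F W. mink (wvec (XF F q)) (wvec (XF F q)) < 0}"

lemma open_nonzero: "open S \<Longrightarrow> continuous_on S f \<Longrightarrow> open {x \<in> S. (f x :: real) \<noteq> 0}"
proof -
  assume "open S" "continuous_on S f"
  then have "open (S \<inter> f -` (- {0}))" by (intro continuous_open_preimage) auto
  moreover have "S \<inter> f -` (- {0}) = {x \<in> S. f x \<noteq> 0}" by auto
  ultimately show ?thesis by simp
qed

lemma open_negative: "open S \<Longrightarrow> continuous_on S f \<Longrightarrow> open {x \<in> S. (f x :: real) < 0}"
proof -
  assume "open S" "continuous_on S f"
  then have "open (S \<inter> f -` {..<0})" by (intro continuous_open_preimage) auto
  moreover have "S \<inter> f -` {..<0} = {x \<in> S. f x < 0}" by auto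
  ultimately show ?thesis by simp
qed

lemma smooth_XF: "open W \<Longrightarrow> smooth_on W F \<Longrightarrow> smooth_on W (\<lambda>q. XF F q i)"
  unfolding XF_def by (rule smooth_frechet_derivative)

lemma smooth_gram: "open W \<Longrightarrow> smooth_on W F \<Longrightarrow> smooth_on W (\<lambda>q. gram (XF F q) $ i $ j)"
  unfolding gram_def by (simp add: smooth_mink smooth_XF)

lemma smooth_amat: "open W \<Longrightarrow> smooth_on W F \<Longrightarrow> smooth_on W (\<lambda>q. amat (XF F q) $ i $ j)"
  unfolding amat_def by (simp add: smooth_nth smooth_fst smooth_XF)

lemma open_frame_region: "open W \<Longrightarrow> smooth_on W F \<Longrightarrow> open (frame_region F W)"
proof -
  assume o: "open W" and s: "smooth_on W F"
  have c1: "continuous_on W (\<lambda>q. det (gram (XF F q)))"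
    by (intro smooth_continuous smooth_det smooth_gram o s)
  have c2: "continuous_on W (\<lambda>q. det (amat (XF F q)))"
    by (intro smooth_continuous smooth_det smooth_amat o s)
  have o1: "open {q \<in> W. det (gram (XF F q)) \<noteq> 0}" by (rule open_nonzero[OF o c1])
  have c2': "continuous_on {q \<in> W. det (gram (XF F q)) \<noteq> 0} (\<lambda>q. det (amat (XF F q)))"
    using c2 by (rule continuous_on_subset) auto
  have "open {q \<in> {q \<in> W. det (gram (XF F q)) \<noteq> 0}. det (amat (XF F q)) \<noteq> 0}"
    by (rule open_nonzero[OF o1 c2'])
  moreover have "{q \<in> {q \<in> W. det (gram (XF F q)) \<noteq> 0}. det (amat (XF F q)) \<noteq> 0} = frame_region F W"
    by (auto simp: frame_region_def)
  ultimately show ?thesis by simp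
qed

text \<open>Cramer's rule shows that the inverse Gram matrix depends smoothly on the point.\<close>

lemma matrix_inv_cramer:
  fixes M :: "real^'n::finite^'n"
  assumes "det M \<noteq> 0"
  shows "matrix_inv M $ k $ j = det (\<chi> i l. if l = k then axis j 1 $ i else M $ i $ l) / det M"
proof -
  have inv: "M ** matrix_inv M = mat 1" using assms invertible_det_nz invertible_matrix_inv by blast
  have "M *v (matrix_inv M *v axis j 1) = axis j 1"
    by (simp add: matrix_vector_mul_assoc inv)
  then have "matrix_inv M *v axis j 1 = (\<chi> k. det (\<chi> i l. if l = k then axis j 1 $ i else M $ i $ l) / det M)"
    using cramer[OF assms] by blast
  moreover have "(matrix_inv M *v axis j 1) $ k = matrix_inv M $ k $ j"
    by (simp add: matrix_vector_mult_def axis_def if_distrib cong: if_cong)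
  ultimately show ?thesis by simp
qed

lemma smooth_ginv: "open W \<Longrightarrow> smooth_on W F \<Longrightarrow> smooth_on (frame_region F W) (\<lambda>q. matrix_inv (gram (XF F q)) $ k $ j)"
proof -
  assume o: "open W" and s: "smooth_on W F"
  have sub: "frame_region F W \<subseteq> W" by (auto simp: frame_region_def)
  have "smooth_on (frame_region F W) (\<lambda>q. det (\<chi> i l. if l = k then axis j 1 $ i else gram (XF F q) $ i $ l) / det (gram (XF F q)))"
  proof (rule smooth_divide[OF open_frame_region[OF o s]])
    show "smooth_on (frame_region F W) (\<lambda>q. det (\<chi> i l. if l = k then axis j 1 $ i else gram (XF F q) $ i $ l))"
    proof (rule smooth_det)
      fix i l
      show "smooth_on (frame_region F W) (\<lambda>q. (\<chi> i l. if l = k then axis j 1 $ i else gram (XF F q) $ i $ l) $ i $ l)"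
        by (cases "l = k") (simp_all add: smooth_const smooth_subset[OF smooth_gram[OF o s] sub])
    qed
    show "smooth_on (frame_region F W) (\<lambda>q. det (gram (XF F q)))"
      by (rule smooth_det) (rule smooth_subset[OF smooth_gram[OF o s] sub])
  qed (auto simp: frame_region_def)
  then show ?thesis
    by (rule smooth_cong[OF open_frame_region[OF o s], rotated]) (simp add: frame_region_def matrix_inv_cramer)
qed

lemma smooth_wvec: "open W \<Longrightarrow> smooth_on W F \<Longrightarrow> smooth_on (frame_region F W) (\<lambda>q. wvec (XF F q))"
proof -
  assume o: "open W" and s: "smooth_on W F"
  have sub: "frame_region F W \<subseteq> W" by (auto simp: frame_region_def)
  have X: "smooth_on (frame_region F W) (\<lambda>q. XF F q i)" for i by (rule smooth_subset[OF smooth_XF[OF o s] sub])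
  show ?thesis
    unfolding wvec_def proj_def coef_nth
    by (intro smooth_diff smooth_const smooth_sum smooth_scaleR smooth_mult smooth_mink X smooth_ginv[OF o s]) auto
qed

lemma open_normal_region: "open W \<Longrightarrow> smooth_on W F \<Longrightarrow> open (normal_region F W)"
proof -
  assume o: "open W" and s: "smooth_on W F"
  have "continuous_on (frame_region F W) (\<lambda>q. mink (wvec (XF F q)) (wvec (XF F q)))"
    by (intro smooth_continuous smooth_mink smooth_wvec o s)
  then show ?thesis unfolding normal_region_def by (rule open_negative[OF open_frame_region[OF o s]])
qed

lemma normal_region_sub: "normal_region F W \<subseteq> frame_region F W" "frame_region F W \<subseteq> W" by (auto simp: normal_region_def frame_region_def)

lemma smooth_NF: "open W \<Longrightarrow> smooth_on W F \<Longrightarrow> smooth_on (normal_region F W) (NF F)"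
proof -
  assume o: "open W" and s: "smooth_on W F"
  have w: "smooth_on (normal_region F W) (\<lambda>q. wvec (XF F q))" by (rule smooth_subset[OF smooth_wvec[OF o s] normal_region_sub(1)])
  have "smooth_on (normal_region F W) (\<lambda>q. inverse (sqrt (- mink (wvec (XF F q)) (wvec (XF F q)))) *\<^sub>R wvec (XF F q))"
    by (intro smooth_scaleR w smooth_inverse smooth_sqrt open_normal_region o s smooth_minus smooth_mink) (auto simp: normal_region_def)
  then show ?thesis unfolding NF_def nvec_def by (simp add: divide_inverse_commute)
qed

lemma smooth_HF: "open W \<Longrightarrow> smooth_on W F \<Longrightarrow> smooth_on (normal_region F W) (HF F)"
proof -
  assume o: "open W" and s: "smooth_on W F"
  have sub: "normal_region F W \<subseteq> W" using normal_region_sub by blast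
  show ?thesis unfolding HF_def[abs_def]
    by (intro smooth_sum smooth_mult smooth_mink smooth_frechet_derivative[OF open_normal_region[OF o s] smooth_NF[OF o s]]
        smooth_subset[OF smooth_XF[OF o s] sub] smooth_subset[OF smooth_ginv[OF o s] normal_region_sub(1)]) auto
qed

lemma smooth_SF: "open W \<Longrightarrow> smooth_on W F \<Longrightarrow> smooth_on (normal_region F W) (SF F)"
proof -
  assume o: "open W" and s: "smooth_on W F"
  have sub: "normal_region F W \<subseteq> W" using normal_region_sub by blast
  show ?thesis unfolding SF_def[abs_def]
    by (intro smooth_minus smooth_mink smooth_NF[OF o s] smooth_subset[OF s sub])
qed

lemma NF_props:
  assumes "q \<in> normal_region F W"
  shows "mink (NF F q) (XF F q j) = 0" "mink (NF F q) (NF F q) = -1"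
  using assms nvec_props[of "XF F q"] by (auto simp: NF_def normal_region_def frame_region_def)

lemma has_derivative_space_slice: "(f has_derivative f') (at (u,t)) \<Longrightarrow> ((\<lambda>v. f (v,t)) has_derivative (\<lambda>h. f' (h,0))) (at u)"
proof -
  assume d: "(f has_derivative f') (at (u,t))"
  have "((\<lambda>v. (v,t)) has_derivative (\<lambda>h. (h,0))) (at u)"
    by (auto intro!: derivative_eq_intros)
  from diff_chain_at[OF this, of f f'] d show ?thesis by (simp add: o_def)
qed

lemma has_derivative_time_slice: "(f has_derivative f') (at (u,t)) \<Longrightarrow> ((\<lambda>s. f (u,s)) has_derivative (\<lambda>r. f' (0,r))) (at t)"
proof -
  assume d: "(f has_derivative f') (at (u,t))"
  have "((\<lambda>s. (u,s)) has_derivative (\<lambda>r. (0,r))) (at t)"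
    by (auto intro!: derivative_eq_intros)
  from diff_chain_at[OF this, of f f'] d show ?thesis by (simp add: o_def)
qed

lemma frechet_space_slice: "(f has_derivative f') (at (u,t)) \<Longrightarrow> frechet_derivative (\<lambda>v. f (v,t)) (at u) = (\<lambda>h. f' (h,0))"
  using has_derivative_space_slice frechet_derivative_at by metis

lemma frechet_space_slice_transfer:
  assumes "open G" "(u,t) \<in> G" "\<And>v. (v,t) \<in> G \<Longrightarrow> g v = f (v,t)" "(f has_derivative f') (at (u,t))"
  shows "frechet_derivative g (at u) = (\<lambda>h. f' (h,0))"
proof -
  have oG: "open {v. (v,t) \<in> G}"
  proof -
    have "continuous_on UNIV (\<lambda>v::'a. (v,t))" by (intro continuous_intros)
    then have "open (UNIV \<inter> (\<lambda>v::'a. (v,t)) -` G)" using assms(1) by (intro continuous_open_preimage) auto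
    then show ?thesis by (simp add: vimage_def)
  qed
  have "(g has_derivative (\<lambda>h. f' (h,0))) (at u)"
    by (rule has_derivative_transform_within_open[OF has_derivative_space_slice[OF assms(4)] oG]) (use assms in auto)
  then show ?thesis using frechet_derivative_at by metis
qed

lemma has_derivative_locally_const:
  assumes "open G" "p \<in> G" "\<And>q. q \<in> G \<Longrightarrow> f q = c" "(f has_derivative f') (at p)"
  shows "f' h = 0"
proof -
  have "((\<lambda>q. c) has_derivative (\<lambda>h. 0)) (at p)" by simp
  then have "(f has_derivative (\<lambda>h. 0)) (at p)"
    by (rule has_derivative_transform_within_open[OF _ assms(1,2)]) (use assms(3) in auto)
  then have "f' = (\<lambda>h. 0)" using assms(4) has_derivative_unique by blast
  then show ?thesis by simp
qed

lemma has_derivative_ray_const: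
  fixes \<Phi> :: "'a::real_normed_vector \<Rightarrow> 'b::real_normed_vector"
  assumes d: "(\<Phi> has_derivative \<Phi>') (at p)" and r: "r > 0"
    and z: "\<And>s. 0 \<le> s \<Longrightarrow> s < r \<Longrightarrow> \<Phi> (p + s *\<^sub>R v) = \<Phi> p"
  shows "\<Phi>' v = 0"
proof -
  have a: "((\<lambda>s. p + s *\<^sub>R v) has_derivative (\<lambda>s. s *\<^sub>R v)) (at 0)"
    by (auto intro!: derivative_eq_intros)
  have "((\<lambda>s. \<Phi> (p + s *\<^sub>R v)) has_derivative (\<lambda>s. \<Phi>' (s *\<^sub>R v))) (at 0)"
    using diff_chain_at[OF a, of \<Phi> \<Phi>'] d by (simp add: o_def)
  then have h1: "((\<lambda>s. \<Phi> (p + s *\<^sub>R v)) has_derivative (\<lambda>s. \<Phi>' (s *\<^sub>R v))) (at 0 within {0..<r})"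
    by (rule has_derivative_at_withinI)
  have "((\<lambda>s. \<Phi> p) has_derivative (\<lambda>s. 0)) (at 0 within {0..<r})" by simp
  then have h2: "((\<lambda>s. \<Phi> (p + s *\<^sub>R v)) has_derivative (\<lambda>s. 0)) (at 0 within {0..<r})"
    by (rule has_derivative_transform_within[OF _ r]) (use r z in auto)
  have "(\<lambda>s. \<Phi>' (s *\<^sub>R v)) = (\<lambda>s. 0)"
  proof (rule frechet_derivative_unique_within[OF h1 h2])
    fix i :: real and e :: real assume "i \<in> Basis" "e > 0"
    then have i: "i = 1" by simp
    show "\<exists>d. 0 < \<bar>d\<bar> \<and> \<bar>d\<bar> < e \<and> 0 + d *\<^sub>R i \<in> {0..<r}"
      by (rule exI[of _ "min e r / 2"]) (use \<open>e > 0\<close> r i in auto)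
  qed
  then have "\<Phi>' (1 *\<^sub>R v) = 0" by metis
  then show ?thesis by simp
qed

lemma dX_eq: "open W \<Longrightarrow> smooth_on W F \<Longrightarrow> (u,t) \<in> W \<Longrightarrow> dX F u t i = XF F (u,t) i"
  unfolding dX_def XF_def e_space_def using frechet_space_slice[OF smooth_has_derivative] by metis

lemma gmat_eq:
  assumes "open W" "smooth_on W F" "(u,t) \<in> W"
  shows "gmat F u t = gram (XF F (u,t))"
  unfolding gmat_def gram_def using dX_eq[OF assms] by (simp add: vec_eq_iff)

lemma nu_eq:
  assumes o: "open W" and s: "smooth_on W F" and q: "(u,t) \<in> normal_region F W"
  shows "nu F u t = NF F (u,t)"
proof -
  have W: "(u,t) \<in> W" using q normal_region_sub by blast
  define X where "X = XF F (u,t)"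
  have dg: "det (gram X) \<noteq> 0" and da: "det (amat X) \<noteq> 0" and w: "mink (wvec X) (wvec X) < 0"
    using q by (auto simp: normal_region_def frame_region_def X_def)
  have "(THE n. (\<forall>i. mink n (dX F u t i) = 0) \<and> mink n n = -1 \<and> snd n > 0) = nvec X"
  proof (rule the_equality)
    show "(\<forall>i. mink (nvec X) (dX F u t i) = 0) \<and> mink (nvec X) (nvec X) = -1 \<and> snd (nvec X) > 0"
      using nvec_props[OF dg w] dX_eq[OF o s W] by (simp add: X_def)
    fix n assume "(\<forall>i. mink n (dX F u t i) = 0) \<and> mink n n = -1 \<and> snd n > 0"
    then show "n = nvec X" using nvec_unique[OF dg da w] dX_eq[OF o s W] by (simp add: X_def)
  qed
  then show ?thesis by (simp add: nu_def NF_def X_def)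
qed

lemma mcurv_eq:
  assumes o: "open W" and s: "smooth_on W F" and q: "(u,t) \<in> normal_region F W"
  shows "mcurv F u t = HF F (u,t)"
proof -
  have W: "(u,t) \<in> W" using q normal_region_sub by blast
  have oG: "open (normal_region F W)" by (rule open_normal_region[OF o s])
  have dN: "(NF F has_derivative frechet_derivative (NF F) (at (u,t))) (at (u,t))"
    by (rule smooth_has_derivative[OF oG smooth_NF[OF o s] q])
  have fd: "frechet_derivative (\<lambda>v. nu F v t) (at u) = (\<lambda>h. frechet_derivative (NF F) (at (u,t)) (h,0))"
    by (rule frechet_space_slice_transfer[OF oG q _ dN]) (simp add: nu_eq[OF o s])
  show ?thesis
    unfolding mcurv_def HF_def ginv_def gmat_eq[OF o s W] sff_def fd dX_eq[OF o s W]
    by (simp add: e_space_def)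
qed

lemma Sfun_eq:
  assumes o: "open W" and s: "smooth_on W F" and q: "(u,t) \<in> normal_region F W"
  shows "Sfun F u t = SF F (u,t)"
  unfolding Sfun_def SF_def nu_eq[OF assms] ..

lemma spacelike_normal_region:
  assumes o: "open W" and s: "smooth_on W F" and W: "(u,t) \<in> W"
    and pd: "\<forall>v. v \<noteq> 0 \<longrightarrow> v \<bullet> (gmat F u t *v v) > 0"
  shows "(u,t) \<in> normal_region F W"
proof -
  have pd': "\<And>v. v \<noteq> 0 \<Longrightarrow> v \<bullet> (gram (XF F (u,t)) *v v) > 0" using pd gmat_eq[OF o s W] by simp
  show ?thesis unfolding normal_region_def frame_region_def
    using W posdef_det_gram[OF pd'] posdef_det_amat[OF pd'] posdef_wvec[OF pd'] by simp
qed

text \<open>Geometry of the cone. \<open>cone_base\<close> projects a point of the upper half space to the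
  base hyperplane; \<open>cone_grad \<phi>\<close> is the (unnormalised) Minkowski gradient of
  \<open>q \<mapsto> \<phi>(cone_base q)\<close>, and the cone normal is its normalisation, smooth on the open
  set \<open>cone_region \<phi>\<close> where \<open>cone_grad\<close> is spacelike.\<close>

definition cone_base :: "'n::finite pt \<Rightarrow> real^'n" where "cone_base q = inverse (snd q) *\<^sub>R fst q"

definition cone_grad :: "(real^'n::finite \<Rightarrow> real) \<Rightarrow> 'n pt \<Rightarrow> 'n pt" where
  "cone_grad \<phi> q = (egrad \<phi> (cone_base q), egrad \<phi> (cone_base q) \<bullet> cone_base q)"

definition time_nonzero :: "'n::finite pt set" where "time_nonzero = {q. snd q \<noteq> 0}"

definition cone_region :: "(real^'n::finite \<Rightarrow> real) \<Rightarrow> 'n pt set" where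
  "cone_region \<phi> = {q \<in> time_nonzero. - mink (cone_grad \<phi> q) (cone_grad \<phi> q) < 0}"

lemma cone_normal_eq: "cone_normal \<phi> q = cone_grad \<phi> q /\<^sub>R sqrt (mink (cone_grad \<phi> q) (cone_grad \<phi> q))"
  by (simp add: cone_normal_def cone_grad_def cone_base_def Let_def)

lemma open_time_nonzero: "open (time_nonzero :: 'n::finite pt set)"
proof -
  have "open {q::'n pt. q \<in> UNIV \<and> snd q \<noteq> 0}" by (rule open_nonzero[OF open_UNIV continuous_on_snd[OF continuous_on_id]])
  then show ?thesis by (simp add: time_nonzero_def)
qed

lemma smooth_cone_base: "smooth_on time_nonzero cone_base"
  unfolding cone_base_def[abs_def]
  by (intro smooth_scaleR smooth_inverse open_time_nonzero smooth_snd smooth_fst smooth_id) (auto simp: time_nonzero_def)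

lemma smooth_egrad: "smooth_on UNIV \<phi> \<Longrightarrow> smooth_on UNIV (egrad \<phi>)"
  unfolding egrad_def[abs_def] by (intro smooth_vec smooth_frechet_derivative) auto

lemma smooth_cone_grad: "smooth_on UNIV \<phi> \<Longrightarrow> smooth_on time_nonzero (cone_grad \<phi>)"
proof -
  assume p: "smooth_on UNIV \<phi>"
  have e: "smooth_on time_nonzero (\<lambda>q. egrad \<phi> (cone_base q))"
    by (rule smooth_compose[OF open_time_nonzero open_UNIV smooth_egrad[OF p] smooth_cone_base]) auto
  show ?thesis unfolding cone_grad_def[abs_def] by (intro smooth_Pair e smooth_inner smooth_cone_base)
qed

lemma open_cone_region: "smooth_on UNIV \<phi> \<Longrightarrow> open (cone_region \<phi>)"
  unfolding cone_region_def by (intro open_negative open_time_nonzero smooth_continuous smooth_minus smooth_mink smooth_cone_grad)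

lemma smooth_cone_normal: "smooth_on UNIV \<phi> \<Longrightarrow> smooth_on (cone_region \<phi>) (cone_normal \<phi>)"
proof -
  assume p: "smooth_on UNIV \<phi>"
  have sub: "cone_region \<phi> \<subseteq> time_nonzero" by (auto simp: cone_region_def)
  have N: "smooth_on (cone_region \<phi>) (cone_grad \<phi>)" by (rule smooth_subset[OF smooth_cone_grad[OF p] sub])
  have "smooth_on (cone_region \<phi>) (\<lambda>q. inverse (sqrt (mink (cone_grad \<phi> q) (cone_grad \<phi> q))) *\<^sub>R cone_grad \<phi> q)"
    by (intro smooth_scaleR N smooth_inverse smooth_sqrt open_cone_region p smooth_mink) (auto simp: cone_region_def)
  then show ?thesis by (simp add: cone_normal_eq[abs_def])
qed

lemma cone_normal_homogeneous:
  assumes c: "c > 0" shows "cone_normal \<phi> (c *\<^sub>R q) = cone_normal \<phi> q"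
proof -
  have e: "fst (c *\<^sub>R q) /\<^sub>R snd (c *\<^sub>R q) = fst q /\<^sub>R snd q"
  proof (cases "snd q = 0")
    case True then show ?thesis by simp
  next
    case False then show ?thesis using c by (simp add: field_simps)
  qed
  show ?thesis by (simp only: cone_normal_def Let_def e)
qed

lemma bcone_point:
  assumes "q \<in> bcone \<phi>"
  obtains l x where "l > 0" "\<phi> x = 0" "q = (l *\<^sub>R x, l)"
  using assms unfolding bcone_def by blast

lemma cone_base_bcone: "l > 0 \<Longrightarrow> cone_base (l *\<^sub>R x, l) = x"
  by (simp add: cone_base_def)

lemma bcone_in_cone_region:
  assumes l: "l > 0" and x: "norm x < 1" and g: "egrad \<phi> x \<noteq> 0"
  shows "(l *\<^sub>R x, l) \<in> cone_region \<phi>"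
proof -
  define gg where "gg = egrad \<phi> x"
  have "(gg \<bullet> x)\<^sup>2 \<le> (gg \<bullet> gg) * (x \<bullet> x)" by (rule Cauchy_Schwarz_ineq)
  also have "\<dots> < gg \<bullet> gg * 1"
  proof (rule mult_strict_left_mono)
    show "x \<bullet> x < 1" using x by (simp add: power2_norm_eq_inner[symmetric] abs_square_less_1)
    show "0 < gg \<bullet> gg" using g by (simp add: gg_def)
  qed
  finally have "(gg \<bullet> x)\<^sup>2 < gg \<bullet> gg" by simp
  then show ?thesis using l
    by (simp add: cone_region_def time_nonzero_def cone_grad_def cone_base_bcone gg_def[symmetric] mink_def power2_eq_square)
qed

lemma cone_normal_props:
  assumes l: "l > 0" and x: "norm x < 1" and g: "egrad \<phi> x \<noteq> 0"
  shows "mink (l *\<^sub>R x, l) (cone_normal \<phi> (l *\<^sub>R x, l)) = 0"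
    "mink (cone_normal \<phi> (l *\<^sub>R x, l)) (cone_normal \<phi> (l *\<^sub>R x, l)) = 1"
proof -
  have V: "(l *\<^sub>R x, l) \<in> cone_region \<phi>" by (rule bcone_in_cone_region[OF assms])
  define N where "N = cone_grad \<phi> (l *\<^sub>R x, l)"
  have pos: "mink N N > 0" using V by (simp add: cone_region_def N_def)
  have "mink (l *\<^sub>R x, l) N = 0" using l
    by (simp add: N_def cone_grad_def cone_base_bcone mink_def inner_commute)
  then show "mink (l *\<^sub>R x, l) (cone_normal \<phi> (l *\<^sub>R x, l)) = 0"
    by (simp add: cone_normal_eq N_def[symmetric] mink_scaleR_right)
  show "mink (cone_normal \<phi> (l *\<^sub>R x, l)) (cone_normal \<phi> (l *\<^sub>R x, l)) = 1"
    using pos real_sqrt_pow2[of "mink N N"]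
    by (simp add: cone_normal_eq N_def[symmetric] mink_scaleR_right mink_scaleR_left power2_eq_square field_simps)
qed

lemma egrad_derivative:
  assumes "(\<phi> has_derivative L) (at x)"
  shows "L v = egrad \<phi> x \<bullet> v"
proof -
  have lin: "linear L" using assms has_derivative_bounded_linear bounded_linear.linear by blast
  have fd: "frechet_derivative \<phi> (at x) = L" using assms frechet_derivative_at by metis
  have "L v = L (\<Sum>i\<in>UNIV. v $ i *\<^sub>R axis i 1)"
    using basis_expansion[of v] by (simp add: scalar_mult_eq_scaleR)
  also have "\<dots> = (\<Sum>i\<in>UNIV. v $ i * L (axis i 1))" using lin by (simp add: linear_sum linear_cmul)
  also have "\<dots> = egrad \<phi> x \<bullet> v" by (simp add: egrad_def inner_vec_def fd mult.commute)
  finally show ?thesis .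
qed

lemma has_derivative_cone_defining:
  assumes p: "smooth_on UNIV \<phi>" and q: "q \<in> time_nonzero"
  shows "((\<lambda>q. \<phi> (cone_base q)) has_derivative (\<lambda>h. mink (cone_grad \<phi> q) h / snd q)) (at q)"
proof -
  define s where "s = snd q"
  have s0: "s \<noteq> 0" using q by (simp add: time_nonzero_def s_def)
  have dx: "(cone_base has_derivative (\<lambda>h. inverse (snd q) *\<^sub>R fst h + (- (inverse (snd q) * snd h * inverse (snd q))) *\<^sub>R fst q)) (at q)"
    unfolding cone_base_def[abs_def] using s0 s_def by (auto intro!: derivative_eq_intros)
  have dphi: "(\<phi> has_derivative frechet_derivative \<phi> (at (cone_base q))) (at (cone_base q))"
    by (rule smooth_has_derivative[OF open_UNIV p]) simp
  have c: "((\<lambda>q. \<phi> (cone_base q)) has_derivative (\<lambda>h. frechet_derivative \<phi> (at (cone_base q))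
            (inverse (snd q) *\<^sub>R fst h + (- (inverse (snd q) * snd h * inverse (snd q))) *\<^sub>R fst q))) (at q)"
    using diff_chain_at[OF dx dphi] by (simp add: o_def)
  have eq: "frechet_derivative \<phi> (at (cone_base q))
            (inverse (snd q) *\<^sub>R fst h + (- (inverse (snd q) * snd h * inverse (snd q))) *\<^sub>R fst q)
          = mink (cone_grad \<phi> q) h / snd q" for h
    unfolding egrad_derivative[OF dphi] using s0
    by (simp add: cone_grad_def mink_def cone_base_def inner_add_right inner_diff_right s_def[symmetric] field_simps)
  show ?thesis using c unfolding eq .
qed

lemma chart_rays:
  assumes U: "openin (top_of_set {u::real^'n::finite. 0 \<le> u $ i0}) U" and u: "u \<in> U"
  obtains r where "r > 0" "\<And>s k. 0 \<le> s \<Longrightarrow> s < r \<Longrightarrow> u + s *\<^sub>R axis k 1 \<in> U"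
proof -
  obtain Op where O: "open Op" "U = {u. 0 \<le> u $ i0} \<inter> Op" using U by (auto simp: openin_open)
  then have uO: "u \<in> Op" "0 \<le> u $ i0" using u by auto
  obtain r where r: "r > 0" "ball u r \<subseteq> Op" using O(1) uO(1) open_contains_ball by blast
  have "u + s *\<^sub>R axis k 1 \<in> U" if "0 \<le> s" "s < r" for s k
  proof -
    have "dist u (u + s *\<^sub>R axis k 1) = s" using that(1) by (simp add: dist_norm norm_minus_commute)
    then have "u + s *\<^sub>R axis k 1 \<in> Op" using r that by auto
    moreover have "0 \<le> (u + s *\<^sub>R axis k 1) $ i0" using uO(2) that(1) by (simp add: axis_def)
    ultimately show ?thesis using O(2) by simp
  qed
  then show ?thesis using r(1) that by blast
qed

lemma support_pos:
  assumes l: "l > 0" and x: "norm x < 1" and N: "mink N N = -1" "snd N > 0"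
  shows "mink (l *\<^sub>R x, l) N < 0"
proof -
  have "fst N \<bullet> fst N = snd N ^ 2 - 1" using N(1) by (simp add: mink_def power2_eq_square)
  then have "norm (fst N) ^ 2 = snd N ^ 2 - 1" by (simp only: power2_norm_eq_inner)
  then have "norm (fst N) < snd N" using N(2)
    by (smt (verit) norm_ge_zero power2_less_imp_less power_mono)
  have "x \<bullet> fst N \<le> norm x * norm (fst N)" by (rule norm_cauchy_schwarz)
  also have "\<dots> \<le> norm (fst N)" using x by (simp add: mult_left_le_one_le)
  also have "\<dots> < snd N" by fact
  finally have "x \<bullet> fst N - snd N < 0" by simp
  then show ?thesis using l by (simp add: mink_def mult_pos_neg)
qed

lemma sum_single: "(\<And>k. k \<noteq> i \<Longrightarrow> f k = 0) \<Longrightarrow> (\<Sum>k\<in>(UNIV::'n::finite set). f k) = (f i :: real)"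
proof -
  assume z: "\<And>k. k \<noteq> i \<Longrightarrow> f k = 0"
  have "(\<Sum>k\<in>UNIV. f k) = f i + (\<Sum>k\<in>UNIV - {i}. f k)" by (rule sum.remove) auto
  also have "(\<Sum>k\<in>UNIV - {i}. f k) = 0" using z by (intro sum.neutral) auto
  finally show ?thesis by simp
qed

text \<open>We fix a boundary point \<open>p0 = (u, t)\<close> of the flow
  (\<open>u $ i0 = 0\<close>) together with the hypotheses of the corollary that are actually used.\<close>

locale mcf_boundary_point =
  fixes \<phi> :: "real^'n::finite \<Rightarrow> real" and F :: "'n pt \<Rightarrow> 'n pt"
    and U :: "(real^'n) set" and W :: "'n pt set" and i0 :: 'n and T :: real
    and u :: "real^'n" and t :: real
  assumes phi_smooth: "smooth_on UNIV \<phi>"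
    and phi_regular: "\<forall>x. \<phi> x = 0 \<longrightarrow> egrad \<phi> x \<noteq> 0"
    and St_ball: "{x. \<phi> x = 0} \<subseteq> ball 0 1"
    and U_chart: "openin (top_of_set {u. 0 \<le> u $ i0}) U"
    and W_open: "open W" and W_sub: "U \<times> {0..<T} \<subseteq> W"
    and F_smooth: "smooth_on W F"
    and spacelike: "\<forall>u\<in>U. \<forall>t\<in>{0..<T}. \<forall>v. v \<noteq> 0 \<longrightarrow> v \<bullet> (gmat F u t *v v) > 0"
    and flow: "\<forall>u\<in>U. \<forall>t\<in>{0..<T}.
                 vector_derivative (\<lambda>s. F (u, s)) (at t) = mcurv F u t *\<^sub>R nu F u t"
    and bdry: "\<forall>u\<in>U. \<forall>t\<in>{0..<T}. u $ i0 = 0 \<longrightarrow> F (u, t) \<in> bcone \<phi>"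
    and neumann: "\<forall>u\<in>U. \<forall>t\<in>{0..<T}. u $ i0 = 0 \<longrightarrow>
                    mink (nu F u t) (cone_normal \<phi> (F (u, t))) = 0"
    and u_in: "u \<in> U" and t_in: "t \<in> {0..<T}" and u_bdry: "u $ i0 = 0"
begin

abbreviation "p0 \<equiv> (u, t)"
abbreviation "F0 \<equiv> F p0"
abbreviation "X \<equiv> XF F p0"
abbreviation "N0 \<equiv> NF F p0"
abbreviation "H0 \<equiv> HF F p0"
abbreviation "S0 \<equiv> SF F p0"
abbreviation "\<mu>0 \<equiv> cone_normal \<phi> F0"

abbreviation "DF \<equiv> frechet_derivative F (at p0)"
abbreviation "DN \<equiv> frechet_derivative (NF F) (at p0)"
abbreviation "DH \<equiv> frechet_derivative (HF F) (at p0)"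
abbreviation "DS \<equiv> frechet_derivative (SF F) (at p0)"
abbreviation "D\<mu> \<equiv> frechet_derivative (cone_normal \<phi>) (at F0)"
abbreviation DX :: "'n \<Rightarrow> 'n pt \<Rightarrow> 'n pt" where
  "DX j \<equiv> frechet_derivative (\<lambda>q. XF F q j) (at p0)"
abbreviation "DT \<equiv> frechet_derivative (\<lambda>q. frechet_derivative F (at q) e_time) (at p0)"

lemma chart_in_normal_region:
  "v \<in> U \<Longrightarrow> s \<in> {0..<T} \<Longrightarrow> (v, s) \<in> normal_region F W"
  using spacelike_normal_region[OF W_open F_smooth] W_sub spacelike by blast

lemma p0_in: "p0 \<in> normal_region F W" "p0 \<in> W"
  using chart_in_normal_region[OF u_in t_in] normal_region_sub by blast+

lemma F_has_derivative: "q \<in> W \<Longrightarrow> (F has_derivative frechet_derivative F (at q)) (at q)"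
  by (rule smooth_has_derivative[OF W_open F_smooth])

lemma has_derivatives_at_p0:
  "(NF F has_derivative DN) (at p0)"
  "(HF F has_derivative DH) (at p0)"
  "(SF F has_derivative DS) (at p0)"
  "((\<lambda>q. XF F q j) has_derivative DX j) (at p0)"
  "((\<lambda>q. frechet_derivative F (at q) e_time) has_derivative DT) (at p0)"
proof -
  note region = open_normal_region[OF W_open F_smooth] _ p0_in(1)
  show "(NF F has_derivative DN) (at p0)"
    by (rule smooth_has_derivative[OF region]) (rule smooth_NF[OF W_open F_smooth])
  show "(HF F has_derivative DH) (at p0)"
    by (rule smooth_has_derivative[OF region]) (rule smooth_HF[OF W_open F_smooth])
  show "(SF F has_derivative DS) (at p0)"
    by (rule smooth_has_derivative[OF region]) (rule smooth_SF[OF W_open F_smooth])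
  show "((\<lambda>q. XF F q j) has_derivative DX j) (at p0)"
    by (rule smooth_has_derivative[OF W_open smooth_XF[OF W_open F_smooth] p0_in(2)])
  show "((\<lambda>q. frechet_derivative F (at q) e_time) has_derivative DT) (at p0)"
    by (rule smooth_has_derivative[OF W_open smooth_frechet_derivative[OF W_open F_smooth] p0_in(2)])
qed

lemma XF_at_p0: "X j = DF (e_space j)"
  by (simp add: XF_def)

lemma frame_at_p0: "det (gram X) \<noteq> 0" "det (amat X) \<noteq> 0" "mink (wvec X) (wvec X) < 0"
  using p0_in(1) by (auto simp: normal_region_def frame_region_def)

lemma normal_at_p0: "N0 = nvec X" "mink N0 (X k) = 0" "mink N0 N0 = -1" "snd N0 > 0"
  using nvec_props[OF frame_at_p0(1,3)] by (simp_all add: NF_def)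

lemma flow_equation:
  assumes "v \<in> U" "s \<in> {0..<T}"
  shows "frechet_derivative F (at (v, s)) e_time = HF F (v, s) *\<^sub>R NF F (v, s)"
proof -
  have d: "(F has_derivative frechet_derivative F (at (v, s))) (at (v, s))"
    using F_has_derivative W_sub assms by blast
  have "(0::real^'n, r) = r *\<^sub>R e_time" for r by (simp add: e_time_def)
  then have "((\<lambda>s'. F (v, s')) has_vector_derivative frechet_derivative F (at (v, s)) e_time) (at s)"
    using has_derivative_time_slice[OF d] linear_cmul[OF has_derivative_linear[OF d]]
    by (simp add: has_vector_derivative_def)
  then have "vector_derivative (\<lambda>s'. F (v, s')) (at s) = frechet_derivative F (at (v, s)) e_time"
    by (rule vector_derivative_at)
  then show ?thesis
    using flow assms mcurv_eq[OF W_open F_smooth] nu_eq[OF W_open F_smooth]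
      chart_in_normal_region[OF assms] by simp
qed

text \<open>Two functions that agree on the closed half-chart \<open>U \<times> [0,T)\<close> have the same
  derivative at \<open>p0\<close>, since the half-chart contains a forward segment in every
  coordinate direction.\<close>

lemma derivative_unique_on_chart:
  assumes f: "(f has_derivative f') (at p0)" and g: "(g has_derivative g') (at p0)"
    and eq: "\<And>v s. v \<in> U \<Longrightarrow> s \<in> {0..<T} \<Longrightarrow> f (v, s) = g (v, s)"
  shows "f' = g'"
proof -
  define US where "US = U \<times> {0..<T}"
  obtain r where r: "r > 0" "\<And>s k. 0 \<le> s \<Longrightarrow> s < r \<Longrightarrow> u + s *\<^sub>R axis k 1 \<in> U"
    using chart_rays[OF U_chart u_in] by blast
  have g': "(f has_derivative g') (at p0 within US)"
    by (rule has_derivative_transform_within[OF has_derivative_at_withinI[OF g] zero_less_one])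
      (use u_in t_in eq in \<open>auto simp: US_def\<close>)
  show ?thesis
  proof (rule frechet_derivative_unique_within[OF has_derivative_at_withinI[OF f] g'])
    fix i :: "'n pt" and e :: real assume i: "i \<in> Basis" and e: "e > 0"
    define d where "d = min e (min r (T - t)) / 2"
    have "min e (min r (T - t)) > 0" "min e (min r (T - t)) \<le> e"
      "min e (min r (T - t)) \<le> r" "min e (min r (T - t)) \<le> T - t" using e r(1) t_in by auto
    then have d0: "d > 0" "d < e" "d < r" "t + d < T" unfolding d_def by linarith+
    have "p0 + d *\<^sub>R i \<in> US"
    proof (cases "i \<in> (\<lambda>v. (v, 0)) ` Basis")
      case True
      then obtain k where "i = (axis k 1, 0)" by (auto simp: Basis_vec_def)
      then show ?thesis using r(2)[of d k] d0 t_in by (simp add: US_def)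
    next
      case False
      then have "i = (0, 1)" using i by (auto simp: Basis_prod_def)
      then show ?thesis using u_in d0 t_in by (simp add: US_def)
    qed
    then show "\<exists>d. 0 < \<bar>d\<bar> \<and> \<bar>d\<bar> < e \<and> p0 + d *\<^sub>R i \<in> US"
      using d0 by (intro exI[of _ d]) simp
  qed
qed

lemma boundary_derivative_zero:
  assumes f: "(f has_derivative f') (at p0)"
    and z: "\<And>v s. v \<in> U \<Longrightarrow> s \<in> {0..<T} \<Longrightarrow> v $ i0 = 0 \<Longrightarrow> f (v, s) = 0"
  shows "f' e_time = 0" "k \<noteq> i0 \<Longrightarrow> f' (e_space k) = 0"
proof -
  have fp0: "f p0 = 0" using z u_in t_in u_bdry by blast
  show "f' e_time = 0"
  proof (rule has_derivative_ray_const[OF f, of "T - t"])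
    fix s :: real assume "0 \<le> s" "s < T - t"
    then show "f (p0 + s *\<^sub>R e_time) = f p0" using z[of u "t + s"] fp0 u_in u_bdry t_in
      by (simp add: e_time_def)
  qed (use t_in in simp)
  assume k: "k \<noteq> i0"
  obtain r where r: "r > 0" "\<And>s k. 0 \<le> s \<Longrightarrow> s < r \<Longrightarrow> u + s *\<^sub>R axis k 1 \<in> U"
    using chart_rays[OF U_chart u_in] by blast
  show "f' (e_space k) = 0"
  proof (rule has_derivative_ray_const[OF f r(1)])
    fix s :: real assume "0 \<le> s" "s < r"
    moreover have "(u + s *\<^sub>R axis k 1) $ i0 = 0" using u_bdry k by (simp add: axis_def)
    ultimately show "f (p0 + s *\<^sub>R e_space k) = f p0" using z r(2) fp0 t_in
      by (simp add: e_space_def)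
  qed
qed

lemma boundary_point:
  obtains l x where "l > 0" "norm x < 1" "egrad \<phi> x \<noteq> 0" "F0 = (l *\<^sub>R x, l)"
proof -
  have "F0 \<in> bcone \<phi>" using bdry u_in t_in u_bdry by blast
  then obtain l x where "l > 0" "\<phi> x = 0" "F0 = (l *\<^sub>R x, l)"
    by (rule bcone_point)
  then show ?thesis using that St_ball phi_regular by auto
qed

lemma cone_normal_at_p0:
  "(cone_normal \<phi> has_derivative D\<mu>) (at F0)" "mink F0 \<mu>0 = 0" "mink \<mu>0 \<mu>0 = 1"
proof -
  obtain l x where lx: "l > 0" "norm x < 1" "egrad \<phi> x \<noteq> 0" "F0 = (l *\<^sub>R x, l)"
    by (rule boundary_point)
  have "F0 \<in> cone_region \<phi>" using bcone_in_cone_region[OF lx(1-3)] lx(4) by simp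
  then show "(cone_normal \<phi> has_derivative D\<mu>) (at F0)"
    by (rule smooth_has_derivative[OF open_cone_region[OF phi_smooth] smooth_cone_normal[OF phi_smooth]])
  show "mink F0 \<mu>0 = 0" "mink \<mu>0 \<mu>0 = 1" using cone_normal_props[OF lx(1-3)] lx(4) by simp_all
qed

lemma S_at_p0: "S0 > 0"
proof -
  obtain l x where lx: "l > 0" "norm x < 1" "egrad \<phi> x \<noteq> 0" "F0 = (l *\<^sub>R x, l)"
    by (rule boundary_point)
  show ?thesis using support_pos[OF lx(1,2) normal_at_p0(3,4)] lx(4) by (simp add: SF_def)
qed

lemma neumann_at_p0: "mink N0 \<mu>0 = 0"
proof -
  have "mink (nu F u t) \<mu>0 = 0" using neumann u_in t_in u_bdry by blast
  then show ?thesis using nu_eq[OF W_open F_smooth p0_in(1)] by simp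
qed

lemma normal_derivative_frame: "mink N0 (DX j h) + mink (DN h) (X j) = 0"
proof -
  have d: "((\<lambda>q. mink (NF F q) (XF F q j)) has_derivative
      (\<lambda>h. mink N0 (DX j h) + mink (DN h) (X j))) (at p0)"
    by (rule bounded_bilinear.FDERIV[OF bounded_bilinear_mink has_derivatives_at_p0(1,4)])
  show ?thesis
    by (rule has_derivative_locally_const[OF open_normal_region[OF W_open F_smooth] p0_in(1) _ d])
      (rule NF_props(1))
qed

lemma normal_derivative_normal: "mink (DN h) N0 = 0"
proof -
  have d: "((\<lambda>q. mink (NF F q) (NF F q)) has_derivative
      (\<lambda>h. mink N0 (DN h) + mink (DN h) N0)) (at p0)"
    by (rule bounded_bilinear.FDERIV[OF bounded_bilinear_mink has_derivatives_at_p0(1,1)])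
  have "mink N0 (DN h) + mink (DN h) N0 = 0"
    by (rule has_derivative_locally_const[OF open_normal_region[OF W_open F_smooth] p0_in(1) _ d])
      (rule NF_props(2))
  then show ?thesis by (simp add: mink_sym)
qed

lemma second_derivative_symmetric:
  "DX j e_time = DT (e_space j)" "DX j (e_space k) = DX k (e_space j)"
proof -
  have dX: "((\<lambda>q. frechet_derivative F (at q) (e_space j)) has_derivative DX j) (at p0)" for j
    using has_derivatives_at_p0(4)[of j] by (simp add: XF_def)
  show "DX j e_time = DT (e_space j)"
    by (rule schwarz[OF W_open p0_in(2) F_has_derivative dX has_derivatives_at_p0(5)])
  show "DX j (e_space k) = DX k (e_space j)"
    by (rule schwarz[OF W_open p0_in(2) F_has_derivative dX dX])
qed

lemma flow_derivative: "DT h = DH h *\<^sub>R N0 + H0 *\<^sub>R DN h"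
proof -
  have "((\<lambda>q. HF F q *\<^sub>R NF F q) has_derivative (\<lambda>h. H0 *\<^sub>R DN h + DH h *\<^sub>R N0)) (at p0)"
    by (rule bounded_bilinear.FDERIV[OF bounded_bilinear_scaleR has_derivatives_at_p0(2,1)])
  then have "DT = (\<lambda>h. H0 *\<^sub>R DN h + DH h *\<^sub>R N0)"
    by (rule derivative_unique_on_chart[OF has_derivatives_at_p0(5)]) (rule flow_equation)
  then show ?thesis by (simp add: add.commute)
qed

lemma neumann_derivative:
  "mink N0 (D\<mu> (DF e_time)) + mink (DN e_time) \<mu>0 = 0"
  "k \<noteq> i0 \<Longrightarrow> mink N0 (D\<mu> (X k)) + mink (DN (e_space k)) \<mu>0 = 0"
proof -
  have d\<mu>F: "((\<lambda>q. cone_normal \<phi> (F q)) has_derivative (\<lambda>h. D\<mu> (DF h))) (at p0)"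
    using diff_chain_at[OF F_has_derivative[OF p0_in(2)] cone_normal_at_p0(1)] by (simp add: o_def)
  have d: "((\<lambda>q. mink (NF F q) (cone_normal \<phi> (F q))) has_derivative
      (\<lambda>h. mink N0 (D\<mu> (DF h)) + mink (DN h) \<mu>0)) (at p0)"
    by (rule bounded_bilinear.FDERIV[OF bounded_bilinear_mink has_derivatives_at_p0(1) d\<mu>F])
  have z: "mink (NF F (v, s)) (cone_normal \<phi> (F (v, s))) = 0"
    if "v \<in> U" "s \<in> {0..<T}" "v $ i0 = 0" for v s
  proof -
    have "mink (nu F v s) (cone_normal \<phi> (F (v, s))) = 0" using neumann that by blast
    then show ?thesis by (simp only: nu_eq[OF W_open F_smooth chart_in_normal_region[OF that(1,2)]])
  qed
  show "mink N0 (D\<mu> (DF e_time)) + mink (DN e_time) \<mu>0 = 0"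
    using boundary_derivative_zero(1)[OF d z] .
  have tangential: "\<And>k. k \<noteq> i0 \<Longrightarrow> mink N0 (D\<mu> (DF (e_space k))) + mink (DN (e_space k)) \<mu>0 = 0"
    using boundary_derivative_zero(2)[OF d z] by this
  assume "k \<noteq> i0"
  then have "mink N0 (D\<mu> (DF (e_space k))) + mink (DN (e_space k)) \<mu>0 = 0"
    by (rule tangential)
  then show "mink N0 (D\<mu> (X k)) + mink (DN (e_space k)) \<mu>0 = 0"
    by (simp only: XF_at_p0)
qed

text \<open>Since \<open>\<partial>M\<close> is mapped into the cone, the boundary-tangential frame vectors are
  orthogonal to \<open>\<mu>\<close>.\<close>

lemma boundary_tangent: "k \<noteq> i0 \<Longrightarrow> mink \<mu>0 (X k) = 0"
proof -
  assume k: "k \<noteq> i0"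
  obtain l x where lx: "l > 0" "norm x < 1" "egrad \<phi> x \<noteq> 0" "F0 = (l *\<^sub>R x, l)"
    by (rule boundary_point)
  have F0t: "F0 \<in> time_nonzero" using lx by (simp add: time_nonzero_def)
  have d: "((\<lambda>q. \<phi> (cone_base (F q))) has_derivative (\<lambda>h. mink (cone_grad \<phi> F0) (DF h) / snd F0)) (at p0)"
    using diff_chain_at[OF F_has_derivative[OF p0_in(2)] has_derivative_cone_defining[OF phi_smooth F0t]]
    by (simp add: o_def)
  have z: "\<phi> (cone_base (F (v, s))) = 0" if "v \<in> U" "s \<in> {0..<T}" "v $ i0 = 0" for v s
  proof -
    have "F (v, s) \<in> bcone \<phi>" using bdry that by blast
    then obtain l' x' where "l' > 0" "\<phi> x' = 0" "F (v, s) = (l' *\<^sub>R x', l')"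
      by (rule bcone_point)
    then show ?thesis by (simp add: cone_base_bcone)
  qed
  have tangential: "\<And>k. k \<noteq> i0 \<Longrightarrow> mink (cone_grad \<phi> F0) (DF (e_space k)) / snd F0 = 0"
    using boundary_derivative_zero(2)[OF d z] by this
  have "snd F0 > 0" using lx(1,4) by simp
  then have "mink (cone_grad \<phi> F0) (X k) = 0"
    using tangential[OF k] by (simp add: XF_at_p0)
  then show ?thesis by (simp add: cone_normal_eq mink_scaleR_left)
qed

text \<open>The cone normal is constant along rays, hence \<open>D\<mu>(F0) = 0\<close>.\<close>

lemma cone_normal_radial: "D\<mu> F0 = 0"
proof (rule has_derivative_ray_const[OF cone_normal_at_p0(1) zero_less_one])
  fix s :: real assume "0 \<le> s" "s < 1"
  moreover have "F0 + s *\<^sub>R F0 = (1 + s) *\<^sub>R F0" by (simp add: algebra_simps)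
  ultimately show "cone_normal \<phi> (F0 + s *\<^sub>R F0) = \<mu>0"
    using cone_normal_homogeneous[of "1 + s" \<phi> F0] by simp
qed

abbreviation "m \<equiv> coef X \<mu>0"
abbreviation "mh \<equiv> (\<Sum>j\<in>UNIV. m $ j *\<^sub>R e_space j)"
abbreviation "a \<equiv> coef X (F0 - S0 *\<^sub>R N0)"
abbreviation "c \<equiv> mink N0 (D\<mu> N0)"

lemma mu_expansion: "\<mu>0 = (\<Sum>j\<in>UNIV. m $ j *\<^sub>R X j)" "DF mh = \<mu>0"
proof -
  show mu: "\<mu>0 = (\<Sum>j\<in>UNIV. m $ j *\<^sub>R X j)"
    using normal_orth_in_span[OF frame_at_p0] neumann_at_p0 normal_at_p0(1)
    by (simp add: mink_sym)
  have "linear DF" using has_derivative_linear[OF F_has_derivative[OF p0_in(2)]] .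
  then show "DF mh = \<mu>0" by (simp add: linear_sum linear_cmul XF_at_p0[symmetric] mu[symmetric])
qed

lemma position_expansion: "F0 - S0 *\<^sub>R N0 = (\<Sum>k\<in>UNIV. a $ k *\<^sub>R X k)" "a $ i0 = 0"
proof -
  have "mink (F0 - S0 *\<^sub>R N0) (nvec X) = 0"
    using normal_at_p0 by (simp add: SF_def mink_diff_left mink_add_left mink_scaleR_left)
  then show pos: "F0 - S0 *\<^sub>R N0 = (\<Sum>k\<in>UNIV. a $ k *\<^sub>R X k)"
    by (rule normal_orth_in_span[OF frame_at_p0])
  have "mink (F0 - S0 *\<^sub>R N0) \<mu>0 = (\<Sum>k\<in>UNIV. a $ k * mink (X k) \<mu>0)"
    by (subst pos) (simp add: mink_sum_left mink_scaleR_left)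
  also have "\<dots> = a $ i0 * mink (X i0) \<mu>0"
    by (rule sum_single) (use boundary_tangent in \<open>simp add: mink_sym\<close>)
  finally have "a $ i0 * mink (X i0) \<mu>0 = 0"
    using cone_normal_at_p0(2) neumann_at_p0 by (simp add: mink_diff_left mink_scaleR_left)
  moreover have "mink (X i0) \<mu>0 \<noteq> 0"
  proof
    assume z: "mink (X i0) \<mu>0 = 0"
    have "mink \<mu>0 \<mu>0 = (\<Sum>k\<in>UNIV. m $ k * mink (X k) \<mu>0)"
      by (subst (1) mu_expansion(1)) (simp add: mink_sum_left mink_scaleR_left)
    also have "\<dots> = 0"
      using z boundary_tangent by (intro sum.neutral ballI) (metis mink_sym mult_zero_right)
    finally show False using cone_normal_at_p0(3) by simp
  qed
  ultimately show "a $ i0 = 0" by simp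
qed

text \<open>\<open>\<nabla>_\<mu> H = - H \<langle>\<nu>, D\<mu>(\<nu>)\<rangle>\<close>: the derivative of \<open>H\<close> along \<open>\<mu>\<close> computed from the
  flow equation, the Weingarten relations and the time derivative of the Neumann
  condition.\<close>

lemma H_derivative_mu: "DH mh = - H0 * c"
proof -
  have DH_frame: "DH (e_space j) = mink (DN e_time) (X j)" for j
  proof -
    have "mink N0 (DX j e_time) = DH (e_space j) * mink N0 N0 + H0 * mink N0 (DN (e_space j))"
      by (simp add: second_derivative_symmetric(1) flow_derivative mink_add_right mink_scaleR_right)
    then show ?thesis
      using normal_derivative_frame[of j e_time] normal_derivative_normal[of "e_space j"] normal_at_p0(3)
      by (simp add: mink_sym)
  qed
  have "linear DH" using has_derivative_linear[OF has_derivatives_at_p0(2)] .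
  then have "DH mh = (\<Sum>j\<in>UNIV. m $ j * mink (DN e_time) (X j))"
    by (simp add: linear_sum linear_cmul DH_frame)
  also have "\<dots> = mink (DN e_time) \<mu>0"
    by (subst (2) mu_expansion(1)) (simp add: mink_sum_right mink_scaleR_right)
  also have "\<dots> = - mink N0 (D\<mu> (DF e_time))" using neumann_derivative(1) by simp
  also have "DF e_time = H0 *\<^sub>R N0" using flow_equation[OF u_in t_in] .
  finally show ?thesis
    using has_derivative_linear[OF cone_normal_at_p0(1)] by (simp add: linear_cmul mink_scaleR_right)
qed

lemma S_derivative: "DS h = - (mink F0 (DN h) + mink (DF h) N0)"
proof -
  have "(SF F has_derivative (\<lambda>h. - (mink F0 (DN h) + mink (DF h) N0))) (at p0)"
    unfolding SF_def[abs_def]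
    by (rule has_derivative_minus[OF bounded_bilinear.FDERIV[OF bounded_bilinear_mink
          F_has_derivative[OF p0_in(2)] has_derivatives_at_p0(1)]])
  then have "DS = (\<lambda>h. - (mink F0 (DN h) + mink (DF h) N0))"
    by (rule has_derivative_unique[OF has_derivatives_at_p0(3)])
  then show ?thesis by simp
qed

lemma second_fundamental_form_symmetric:
  "mink (DN (e_space j)) (X k) = mink (DN (e_space k)) (X j)"
proof -
  have "mink N0 (DX j (e_space k)) = mink N0 (DX k (e_space j))"
    by (simp only: second_derivative_symmetric(2)[of j k])
  then show ?thesis
    using normal_derivative_frame[of k "e_space j"] normal_derivative_frame[of j "e_space k"]
    by linarith
qed

lemma normal_derivative_mu: "mink (X k) (DN mh) = mink (DN (e_space k)) \<mu>0"
proof -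
  have "DN mh = (\<Sum>j\<in>UNIV. m $ j *\<^sub>R DN (e_space j))"
    using has_derivative_linear[OF has_derivatives_at_p0(1)] by (simp add: linear_sum linear_cmul)
  then have "mink (X k) (DN mh) = (\<Sum>j\<in>UNIV. m $ j * mink (X k) (DN (e_space j)))"
    by (simp add: mink_sum_right mink_scaleR_right)
  also have "\<dots> = (\<Sum>j\<in>UNIV. m $ j * mink (DN (e_space k)) (X j))"
    by (simp add: second_fundamental_form_symmetric[symmetric] mink_sym[of "X k"])
  also have "\<dots> = mink (DN (e_space k)) \<mu>0"
    by (subst (2) mu_expansion(1)) (simp add: mink_sum_right mink_scaleR_right)
  finally show ?thesis .
qed

text \<open>\<open>\<nabla>_\<mu> S = - S \<langle>\<nu>, D\<mu>(\<nu>)\<rangle>\<close>: expanding \<open>F = S \<nu> + \<Sum> a_k X_k\<close>, the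
  boundary-tangential derivatives of the Neumann condition (\<open>a_{i0} = 0\<close>) and the
  homogeneity of \<open>\<mu>\<close> enter.\<close>

lemma S_derivative_mu: "DS mh = - S0 * c"
proof -
  have linD\<mu>: "linear D\<mu>" using has_derivative_linear[OF cone_normal_at_p0(1)] .
  have tangential: "a $ k * mink (DN (e_space k)) \<mu>0 = - (a $ k * mink N0 (D\<mu> (X k)))" for k
  proof (cases "k = i0")
    case False
    then have "mink (DN (e_space k)) \<mu>0 = - mink N0 (D\<mu> (X k))"
      using neumann_derivative(2)[of k] by linarith
    then show ?thesis by simp
  qed (simp add: position_expansion(2))
  have N0_DN: "mink N0 (DN mh) = 0" using normal_derivative_normal[of mh] by (simp add: mink_sym)
  have "F0 = S0 *\<^sub>R N0 + (\<Sum>k\<in>UNIV. a $ k *\<^sub>R X k)"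
    using position_expansion(1) by (simp add: algebra_simps)
  then have "mink F0 (DN mh) = mink (S0 *\<^sub>R N0 + (\<Sum>k\<in>UNIV. a $ k *\<^sub>R X k)) (DN mh)"
    by (rule arg_cong)
  also have "\<dots> = S0 * mink N0 (DN mh) + (\<Sum>k\<in>UNIV. a $ k * mink (X k) (DN mh))"
    by (simp only: mink_add_left mink_scaleR_left mink_sum_left real_scaleR_def)
  also have "\<dots> = (\<Sum>k\<in>UNIV. - (a $ k * mink N0 (D\<mu> (X k))))"
    by (simp add: N0_DN normal_derivative_mu tangential)
  also have "\<dots> = - mink N0 (D\<mu> (\<Sum>k\<in>UNIV. a $ k *\<^sub>R X k))"
    using linD\<mu> by (simp add: linear_sum linear_cmul mink_sum_right mink_scaleR_right sum_negf)
  also have "\<dots> = - mink N0 (D\<mu> (F0 - S0 *\<^sub>R N0))"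
    by (simp only: position_expansion(1)[symmetric])
  also have "\<dots> = S0 * c"
    using linD\<mu> cone_normal_radial
    by (simp add: linear_diff linear_cmul mink_diff_right mink_minus_right mink_scaleR_right)
  finally have "mink F0 (DN mh) = S0 * c" .
  moreover have "mink (DF mh) N0 = 0"
    using mu_expansion(2) neumann_at_p0 by (simp add: mink_sym)
  ultimately show ?thesis by (simp add: S_derivative)
qed

lemma gradient_ratio_orth_mu:
  "mink (mgrad F t (\<lambda>v. mcurv F v t / Sfun F v t) u) \<mu>0 = 0"
proof -
  define DQ where "DQ h = (DH h * S0 - H0 * DS h) / (S0 * S0)" for h
  have dQ: "((\<lambda>q. HF F q / SF F q) has_derivative DQ) (at p0)"
    unfolding DQ_def[abs_def]
    by (rule has_derivative_divide'[OF has_derivatives_at_p0(2,3)]) (use S_at_p0 in simp)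
  have fd: "frechet_derivative (\<lambda>v. mcurv F v t / Sfun F v t) (at u) = (\<lambda>h. DQ (h, 0))"
    by (rule frechet_space_slice_transfer[OF open_normal_region[OF W_open F_smooth] p0_in(1) _ dQ])
      (simp add: mcurv_eq[OF W_open F_smooth] Sfun_eq[OF W_open F_smooth])
  have "mgrad F t (\<lambda>v. mcurv F v t / Sfun F v t) u
      = (\<Sum>i\<in>UNIV. \<Sum>j\<in>UNIV. (matrix_inv (gram X) $ i $ j * DQ (e_space j)) *\<^sub>R X i)"
    unfolding mgrad_def fd ginv_def gmat_eq[OF W_open F_smooth p0_in(2)] dX_eq[OF W_open F_smooth p0_in(2)]
    by (simp add: e_space_def)
  then have "mink (mgrad F t (\<lambda>v. mcurv F v t / Sfun F v t) u) \<mu>0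
      = (\<Sum>j\<in>UNIV. m $ j * DQ (e_space j))"
    by (simp only: mink_gradient_coef)
  also have "\<dots> = DQ mh"
    using has_derivative_linear[OF dQ] by (simp add: linear_sum linear_cmul)
  also have "\<dots> = 0"
    by (simp only: DQ_def H_derivative_mu S_derivative_mu) (simp add: algebra_simps)
  finally show ?thesis .
qed

end

theorem corollary5p6:
  fixes \<phi> :: "real^'n::finite \<Rightarrow> real"
    and F :: "'n pt \<Rightarrow> 'n pt"
    and U :: "(real^'n) set" and W :: "'n pt set"
    and i0 :: 'n and T :: real
  assumes n2: "CARD('n) \<ge> 2"
    and phi_smooth: "smooth_on UNIV \<phi>"
    and phi_regular: "\<forall>x. \<phi> x = 0 \<longrightarrow> egrad \<phi> x \<noteq> 0"
    and St_ball: "{x. \<phi> x = 0} \<subseteq> ball 0 1"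
    and D_domain: "connected {x. \<phi> x < 0}" "{x. \<phi> x < 0} \<noteq> {}" "bounded {x. \<phi> x < 0}"
    and U_chart: "openin (top_of_set {u. 0 \<le> u $ i0}) U"
    and W_open: "open W" and W_sub: "U \<times> {0..<T} \<subseteq> W"
    and F_smooth: "smooth_on W F"
    and embed: "\<forall>t\<in>{0..<T}. inj_on (\<lambda>u. F (u, t)) U"
    and spacelike: "\<forall>u\<in>U. \<forall>t\<in>{0..<T}. \<forall>v. v \<noteq> 0 \<longrightarrow> v \<bullet> (gmat F u t *v v) > 0"
    and inside: "\<forall>u\<in>U. \<forall>t\<in>{0..<T}. F (u, t) \<in> scone \<phi>"
    and flow: "\<forall>u\<in>U. \<forall>t\<in>{0..<T}.
                 vector_derivative (\<lambda>s. F (u, s)) (at t) = mcurv F u t *\<^sub>R nu F u t"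
    and bdry: "\<forall>u\<in>U. \<forall>t\<in>{0..<T}. u $ i0 = 0 \<longrightarrow> F (u, t) \<in> bcone \<phi>"
    and neumann: "\<forall>u\<in>U. \<forall>t\<in>{0..<T}. u $ i0 = 0 \<longrightarrow>
                    mink (nu F u t) (cone_normal \<phi> (F (u, t))) = 0"
  shows "\<forall>u\<in>U. \<forall>t\<in>{0..<T}. u $ i0 = 0 \<longrightarrow>
           mink (mgrad F t (\<lambda>v. mcurv F v t / Sfun F v t) u) (cone_normal \<phi> (F (u, t))) = 0"
proof (intro ballI impI)
  fix u t assume point: "u \<in> U" "t \<in> {0..<T}" "u $ i0 = 0"
  interpret mcf_boundary_point \<phi> F U W i0 T u t
    by (rule mcf_boundary_point.intro) (fact assms point)+
  show "mink (mgrad F t (\<lambda>v. mcurv F v t / Sfun F v t) u) (cone_normal \<phi> (F (u, t))) = 0"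
    by (rule gradient_ratio_orth_mu)
qed

end
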